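(* Let $P\in\mathcal{P}$. If $\nu$ is pathwise differentiable at $P$ with inefficient influence function $\phi_{\mathrm{ext},P}\in L^2(P;\mathcal{H})$, then $\nu$ has efficient influence function $\phi_P=\Pi_{L^2(P;\mathcal{H})}[\phi_{\mathrm{ext},P}\mid\Phi]\in L^2(P;\mathcal{H})$, the orthogonal projection of $\phi_{\mathrm{ext},P}$ in $L^2(P;\mathcal{H})$ onto $\Phi$.
   Context: $(\mathcal{Z},\mathbf{B})$ is a Polish space, $\mathcal{P}$ a model of distributions dominated by a $\sigma$-finite measure $\lambda$, $\mathcal{H}$ a real separable Hilbert space, $\nu:\mathcal{P}\to\mathcal{H}$. $\dot{\mathcal{P}}_P\subseteq L_0^2(P)=\{h\in L^2(P):Ph=0\}$ is the tangent space (closed linear span in $L^2(P)$ of scores $s$ of submodels $\{P_\epsilon\}\subset\mathcal{P}$ with $\|p_\epsilon^{1/2}-p^{1/2}-\epsilon sp^{1/2}/2\|_{L^2(\lambda)}=o(\epsilon)$). $\nu$ is pathwise differentiable at $P$ if there is a continuous linear $\dot{\nu}_P:\dot{\mathcal{P}}_P\to\mathcal{H}$ with $\|\nu(P_\epsilon)-\nu(P)-\epsilon\dot{\nu}_P(s)\|_{\mathcal{H}}=o(\epsilon)$ along every such submodel; its adjoint $\dot{\nu}_P^*:\mathcal{H}\to\dot{\mathcal{P}}_P$ is the efficient influence operator, whose pointwise values are taken from versions forming a separable process: there are a countable dense $\mathcal{H}'\subset\mathcal{H}$ and a $P$-probability-one set $\mathcal{Z}'$ such that for all $h\in\mathcal{H}$,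 $z\in\mathcal{Z}'$ some $h_j\in\mathcal{H}'$ with $h_j\to h$ have $\dot{\nu}_P^*(h_j)(z)\to\dot{\nu}_P^*(h)(z)$. $\phi_P$ is the efficient influence function if $\dot{\nu}_P^*(h)(z)=\langle h,\phi_P(z)\rangle_{\mathcal{H}}$ for all $h\in\mathcal{H}$ and all $z$ in a $P$-probability-one set. An influence operator is the adjoint $\dot{\nu}_{\mathrm{ext},P}^*:\mathcal{H}\to L_0^2(P)$ of a bounded linear operator $\dot{\nu}_{\mathrm{ext},P}:L_0^2(P)\to\mathcal{H}$ whose restriction to $\dot{\mathcal{P}}_P$ equals $\dot{\nu}_P$; $\phi_{\mathrm{ext},P}:\mathcal{Z}\to\mathcal{H}$ is an (inefficient) influence function if $\dot{\nu}_{\mathrm{ext},P}^*(h)(z)=\langle h,\phi_{\mathrm{ext},P}(z)\rangle_{\mathcal{H}}$ for all $h\in\mathcal{H}$ and $P$-a.e. $z$. $L^2(P;\mathcal{H})$ is the Hilbert space of Bochner measurable $f$ with $\int\|f\|_{\mathcal{H}}^2dP<\infty$, and $\Phi$ is the $L^2(P;\mathcal{H})$-closure of the linear span of $\{z\mapsto s(z)h:h\in\mathcal{H},s\in\dot{\mathcal{P}}_P\}$. *)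

theory Defs
  imports "HOL-Probability.Probability"
begin

text \<open>The sample space is a Polish type 'z with its Borel sigma-algebra.
  lam is the dominating sigma-finite measure, M the model (a set of probability
  measures on the Borel sets, all absolutely continuous w.r.t. lam), and the
  parameter nu maps measures to a real separable Hilbert space 'h.\<close>

definition model_setting :: "'z::polish_space measure \<Rightarrow> 'z measure set \<Rightarrow> bool" where
  "model_setting lam M \<longleftrightarrow>
     sigma_finite_measure lam \<and> sets lam = sets borel \<and>
     (\<forall>Q\<in>M. prob_space Q \<and> sets Q = sets borel \<and> absolutely_continuous lam Q)"

definition dens :: "'z::polish_space measure \<Rightarrow> 'z measure \<Rightarrow> 'z \<Rightarrow> real" where
  "dens lam Q z = enn2real (RN_deriv lam Q z)"

text \<open>L^2(P) and L^2_0(P) (real-valued functions; elements are representatives).\<close>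
definition L2 :: "'z measure \<Rightarrow> ('z \<Rightarrow> real) set" where
  "L2 P = {f. f \<in> borel_measurable P \<and> integrable P (\<lambda>z. (f z)\<^sup>2)}"

definition L2_0 :: "'z measure \<Rightarrow> ('z \<Rightarrow> real) set" where
  "L2_0 P = {f. f \<in> L2 P \<and> (\<integral>z. f z \<partial>P) = 0}"

definition L2norm :: "'z measure \<Rightarrow> ('z \<Rightarrow> real) \<Rightarrow> real" where
  "L2norm P f = sqrt (\<integral>z. (f z)\<^sup>2 \<partial>P)"

text \<open>A submodel through P with score s: a path eps \<mapsto> Pe eps in M (for eps near 0),
  Pe 0 = P, which is differentiable in quadratic mean with score s:
  || sqrt(p_eps) - sqrt(p) - eps s sqrt(p)/2 ||_{L^2(lam)} = o(eps).\<close>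
definition submodel ::
  "'z::polish_space measure \<Rightarrow> 'z measure set \<Rightarrow> 'z measure \<Rightarrow> (real \<Rightarrow> 'z measure) \<Rightarrow> ('z \<Rightarrow> real) \<Rightarrow> bool" where
  "submodel lam M P Pe s \<longleftrightarrow>
     Pe 0 = P \<and> (\<forall>\<^sub>F e in at 0. Pe e \<in> M) \<and> s \<in> L2 P \<and>
     ((\<lambda>e. (\<integral>\<^sup>+ z. ennreal ((sqrt (dens lam (Pe e) z) - sqrt (dens lam P z)
                 - e * s z * sqrt (dens lam P z) / 2)\<^sup>2) \<partial>lam) / ennreal (e\<^sup>2))
        \<longlongrightarrow> 0) (at 0)"

definition scores :: "'z::polish_space measure \<Rightarrow> 'z measure set \<Rightarrow> 'z measure \<Rightarrow> ('z \<Rightarrow> real) set" where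
  "scores lam M P = {s. \<exists>Pe. submodel lam M P Pe s}"

definition tangent_space :: "'z::polish_space measure \<Rightarrow> 'z measure set \<Rightarrow> 'z measure \<Rightarrow> ('z \<Rightarrow> real) set" where
  "tangent_space lam M P =
     {f \<in> L2 P. \<forall>\<epsilon>>0. \<exists>(n::nat) c s. (\<forall>i<n. s i \<in> scores lam M P) \<and>
        L2norm P (\<lambda>z. f z - (\<Sum>i<n. c i * s i z)) < \<epsilon>}"

definition bounded_linear_on ::
  "'z measure \<Rightarrow> ('z \<Rightarrow> real) set \<Rightarrow> (('z \<Rightarrow> real) \<Rightarrow> 'h::real_normed_vector) \<Rightarrow> bool" where
  "bounded_linear_on P S D \<longleftrightarrow>
     (\<forall>f\<in>S. \<forall>g\<in>S. \<forall>a b. D (\<lambda>z. a * f z + b * g z) = a *\<^sub>R D f + b *\<^sub>R D g) \<and>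
     (\<exists>C. \<forall>f\<in>S. norm (D f) \<le> C * L2norm P f)"

definition pathwise_derivative ::
  "'z::polish_space measure \<Rightarrow> 'z measure set \<Rightarrow> ('z measure \<Rightarrow> 'h::real_normed_vector)
     \<Rightarrow> 'z measure \<Rightarrow> (('z \<Rightarrow> real) \<Rightarrow> 'h) \<Rightarrow> bool" where
  "pathwise_derivative lam M nu P D \<longleftrightarrow>
     bounded_linear_on P (tangent_space lam M P) D \<and>
     (\<forall>Pe s. submodel lam M P Pe s \<longrightarrow>
        ((\<lambda>e. norm (nu (Pe e) - nu P - e *\<^sub>R D s) / \<bar>e\<bar>) \<longlongrightarrow> 0) (at 0))"

definition pathwise_differentiable ::
  "'z::polish_space measure \<Rightarrow> 'z measure set \<Rightarrow> ('z measure \<Rightarrow> 'h::real_normed_vector) \<Rightarrow> 'z measure \<Rightarrow> bool" where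
  "pathwise_differentiable lam M nu P \<longleftrightarrow> (\<exists>D. pathwise_derivative lam M nu P D)"

definition is_adjoint ::
  "'z measure \<Rightarrow> ('z \<Rightarrow> real) set \<Rightarrow> (('z \<Rightarrow> real) \<Rightarrow> 'h::real_inner) \<Rightarrow> ('h \<Rightarrow> 'z \<Rightarrow> real) \<Rightarrow> bool" where
  "is_adjoint P S D A \<longleftrightarrow>
     (\<forall>h. A h \<in> S \<and> (\<forall>f\<in>S. inner (D f) h = (\<integral>z. f z * A h z \<partial>P)))"

text \<open>Efficient influence operator: the adjoint of the pathwise derivative, with
  versions forming a separable process.\<close>
definition efficient_influence_operator ::
  "'z::polish_space measure \<Rightarrow> 'z measure set \<Rightarrow> 'z measure \<Rightarrow> (('z \<Rightarrow> real) \<Rightarrow> 'h::real_inner)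
     \<Rightarrow> ('h \<Rightarrow> 'z \<Rightarrow> real) \<Rightarrow> bool" where
  "efficient_influence_operator lam M P D A \<longleftrightarrow>
     is_adjoint P (tangent_space lam M P) D A \<and>
     (\<exists>H'. countable H' \<and> closure H' = UNIV \<and>
        (AE z in P. \<forall>h. \<exists>hj. (\<forall>j. hj j \<in> H') \<and> hj \<longlonglongrightarrow> h \<and>
                              (\<lambda>j. A (hj j) z) \<longlonglongrightarrow> A h z))"

definition efficient_influence_function ::
  "'z::polish_space measure \<Rightarrow> 'z measure set \<Rightarrow> 'z measure \<Rightarrow> (('z \<Rightarrow> real) \<Rightarrow> 'h::real_inner)
     \<Rightarrow> ('z \<Rightarrow> 'h) \<Rightarrow> bool" where
  "efficient_influence_function lam M P D phi \<longleftrightarrow>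
     (\<exists>A. efficient_influence_operator lam M P D A \<and>
          (AE z in P. \<forall>h. A h z = inner h (phi z)))"

definition influence_function ::
  "'z::polish_space measure \<Rightarrow> 'z measure set \<Rightarrow> 'z measure \<Rightarrow> (('z \<Rightarrow> real) \<Rightarrow> 'h::real_inner)
     \<Rightarrow> ('z \<Rightarrow> 'h) \<Rightarrow> bool" where
  "influence_function lam M P D phi \<longleftrightarrow>
     (\<exists>Dext A. bounded_linear_on P (L2_0 P) Dext \<and>
        (\<forall>f\<in>tangent_space lam M P. Dext f = D f) \<and>
        is_adjoint P (L2_0 P) Dext A \<and>
        (\<forall>h. AE z in P. A h z = inner h (phi z)))"

text \<open>L^2(P;'h): Bochner (= Borel, 'h being separable) measurable, square-integrable norm.\<close>
definition L2H :: "'z measure \<Rightarrow> ('z \<Rightarrow> 'h::real_normed_vector) set" where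
  "L2H P = {f. f \<in> borel_measurable P \<and> integrable P (\<lambda>z. (norm (f z))\<^sup>2)}"

definition L2Hnorm :: "'z measure \<Rightarrow> ('z \<Rightarrow> 'h::real_normed_vector) \<Rightarrow> real" where
  "L2Hnorm P f = sqrt (\<integral>z. (norm (f z))\<^sup>2 \<partial>P)"

definition Phi :: "'z::polish_space measure \<Rightarrow> 'z measure set \<Rightarrow> 'z measure \<Rightarrow> ('z \<Rightarrow> 'h::real_normed_vector) set" where
  "Phi lam M P =
     {f \<in> L2H P. \<forall>\<epsilon>>0. \<exists>(n::nat) s h. (\<forall>i<n. s i \<in> tangent_space lam M P) \<and>
        L2Hnorm P (\<lambda>z. f z - (\<Sum>i<n. s i z *\<^sub>R h i)) < \<epsilon>}"

definition is_orth_proj :: "'z measure \<Rightarrow> ('z \<Rightarrow> 'h::real_inner) set \<Rightarrow> ('z \<Rightarrow> 'h) \<Rightarrow> ('z \<Rightarrow> 'h) \<Rightarrow> bool" where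
  "is_orth_proj P S f g \<longleftrightarrow>
     g \<in> S \<and> (\<forall>k\<in>S. (\<integral>z. inner (f z - g z) (k z) \<partial>P) = 0)"

end

theory Submission
  imports Defs
begin

text \<open>
  The projection exists because Phi is a closed subspace of L2(P;H), and L2(P;H) is complete by
  the Riesz-Fischer argument: a Cauchy sequence has a subsequence with summable increments, which
  converges almost everywhere, and Fatou's lemma turns this into convergence in L2.

  For f in the tangent space and h in H the function z |-> f z h lies in Phi, so orthogonality of
  phi_ext - phi to Phi gives <D f, h> = E[f <h, phi_ext>] = E[f <h, phi>]. Moreover <h, phi> lies in
  the tangent space, being an L2 limit of linear combinations of tangent-space functions. Hence
  h |-> <h, phi> is the adjoint of D on the tangent space.

  The influence-function identity is only available on L2_0(P); it applies because scores have
  mean zero: along a submodel the root densities stay on the unit sphere of L2(lam), so the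
  derivative s sqrt p / 2 is orthogonal to sqrt p, and that inner product is E[s] / 2.
\<close>

section \<open>Square-integrable Hilbert-space-valued functions\<close>

definition L2H_inner :: "'z measure \<Rightarrow> ('z \<Rightarrow> 'h::real_inner) \<Rightarrow> ('z \<Rightarrow> 'h) \<Rightarrow> real" where
  "L2H_inner M f g = (\<integral>z. inner (f z) (g z) \<partial>M)"

lemma L2H_borel_measurable: "f \<in> L2H M \<Longrightarrow> f \<in> borel_measurable M"
  by (simp add: L2H_def)

lemma L2H_bound:
  fixes f :: "'z \<Rightarrow> 'h::{real_normed_vector, second_countable_topology}"
    and g :: "'z \<Rightarrow> 'k::{real_normed_vector, second_countable_topology}"
  assumes "f \<in> borel_measurable M" "g \<in> L2H M" "\<And>z. norm (f z) \<le> C * norm (g z)"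
  shows "f \<in> L2H M"
proof -
  have [measurable]: "f \<in> borel_measurable M" "g \<in> borel_measurable M"
    and int: "integrable M (\<lambda>z. C\<^sup>2 * (norm (g z))\<^sup>2)"
    using assms(1,2) by (auto simp: L2H_def)
  have bound: "norm ((norm (f z))\<^sup>2) \<le> norm (C\<^sup>2 * (norm (g z))\<^sup>2)" for z
  proof -
    have "(norm (f z))\<^sup>2 \<le> (C * norm (g z))\<^sup>2"
      by (rule power_mono[OF assms(3) norm_ge_zero])
    then show ?thesis by (simp add: power_mult_distrib abs_mult)
  qed
  have "integrable M (\<lambda>z. (norm (f z))\<^sup>2)"
    by (rule Bochner_Integration.integrable_bound[OF int _ AE_I2[OF bound]]) measurable
  then show ?thesis using assms(1) by (simp add: L2H_def)
qed

lemma L2H_add: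
  fixes f g :: "'z \<Rightarrow> 'h::{real_normed_vector, second_countable_topology}"
  assumes "f \<in> L2H M" "g \<in> L2H M"
  shows "(\<lambda>z. f z + g z) \<in> L2H M"
proof -
  have [measurable]: "f \<in> borel_measurable M" "g \<in> borel_measurable M"
    and "integrable M (\<lambda>z. (norm (f z))\<^sup>2)" "integrable M (\<lambda>z. (norm (g z))\<^sup>2)"
    using assms by (auto simp: L2H_def)
  then have int: "integrable M (\<lambda>z. 2 * (norm (f z))\<^sup>2 + 2 * (norm (g z))\<^sup>2)" by simp
  have bound: "norm ((norm (f z + g z))\<^sup>2) \<le> norm (2 * (norm (f z))\<^sup>2 + 2 * (norm (g z))\<^sup>2)" for z
  proof -
    have "(norm (f z + g z))\<^sup>2 \<le> (norm (f z) + norm (g z))\<^sup>2"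
      by (rule power_mono[OF norm_triangle_ineq norm_ge_zero])
    also have "\<dots> \<le> 2 * (norm (f z))\<^sup>2 + 2 * (norm (g z))\<^sup>2"
      using zero_le_power2[of "norm (f z) - norm (g z)"] by (simp add: power2_sum power2_diff)
    finally show ?thesis by simp
  qed
  have "integrable M (\<lambda>z. (norm (f z + g z))\<^sup>2)"
    by (rule Bochner_Integration.integrable_bound[OF int _ AE_I2[OF bound]]) measurable
  then show ?thesis by (simp add: L2H_def)
qed

lemma L2H_scaleR:
  fixes f :: "'z \<Rightarrow> 'h::{real_normed_vector, second_countable_topology}"
  assumes "f \<in> L2H M"
  shows "(\<lambda>z. c *\<^sub>R f z) \<in> L2H M"
proof (rule L2H_bound[OF _ assms, of _ "\<bar>c\<bar>"])
  show "(\<lambda>z. c *\<^sub>R f z) \<in> borel_measurable M"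
    using L2H_borel_measurable[OF assms] by measurable
qed simp

lemma L2H_zero: "(\<lambda>z. 0) \<in> L2H M"
  by (simp add: L2H_def)

lemma L2H_diff:
  fixes f g :: "'z \<Rightarrow> 'h::{real_normed_vector, second_countable_topology}"
  assumes "f \<in> L2H M" "g \<in> L2H M"
  shows "(\<lambda>z. f z - g z) \<in> L2H M"
  using L2H_add[OF assms(1) L2H_scaleR[OF assms(2), of "-1"]] by simp

lemma L2H_sum:
  fixes f :: "'i \<Rightarrow> 'z \<Rightarrow> 'h::{real_normed_vector, second_countable_topology}"
  assumes "\<And>i. i \<in> I \<Longrightarrow> f i \<in> L2H M"
  shows "(\<lambda>z. \<Sum>i\<in>I. f i z) \<in> L2H M"
  using assms
proof (induction I rule: infinite_finite_induct)
  case (insert i I)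
  then show ?case using L2H_add[of "f i" M "\<lambda>z. \<Sum>i\<in>I. f i z"] by simp
qed (simp_all add: L2H_zero)

lemma L2H_scaleR_vector:
  fixes h :: "'h::{real_normed_vector, second_countable_topology}"
  assumes "s \<in> L2H M"
  shows "(\<lambda>z. s z *\<^sub>R h) \<in> L2H M"
proof (rule L2H_bound[OF _ assms, of _ "norm h"])
  show "(\<lambda>z. s z *\<^sub>R h) \<in> borel_measurable M"
    using L2H_borel_measurable[OF assms] by measurable
qed (simp add: mult.commute)

lemma L2H_inner_left:
  fixes f :: "'z \<Rightarrow> 'h::{real_inner, second_countable_topology}"
  assumes "f \<in> L2H M"
  shows "(\<lambda>z. inner h (f z)) \<in> L2H M"
proof (rule L2H_bound[OF _ assms, of _ "norm h"])
  show "(\<lambda>z. inner h (f z)) \<in> borel_measurable M"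
    using L2H_borel_measurable[OF assms] by measurable
qed (simp add: Cauchy_Schwarz_ineq2)

lemma L2Hnorm_inner_left_le:
  fixes f :: "'z \<Rightarrow> 'h::{real_inner, second_countable_topology}"
  assumes "f \<in> L2H M"
  shows "L2Hnorm M (\<lambda>z. inner h (f z)) \<le> norm h * L2Hnorm M f"
proof -
  have "(inner h (f z))\<^sup>2 \<le> (norm h)\<^sup>2 * (norm (f z))\<^sup>2" for z
    using power_mono[OF Cauchy_Schwarz_ineq2[of h "f z"] abs_ge_zero, where n=2]
    by (simp add: power_mult_distrib)
  then have "(\<integral>z. (inner h (f z))\<^sup>2 \<partial>M) \<le> (\<integral>z. (norm h)\<^sup>2 * (norm (f z))\<^sup>2 \<partial>M)"
    using L2H_inner_left[OF assms, of h] assms by (intro integral_mono) (simp_all add: L2H_def)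
  then show ?thesis
    using real_sqrt_le_mono by (fastforce simp: L2Hnorm_def real_sqrt_mult)
qed

lemma L2H_inner_integrable:
  fixes f g :: "'z \<Rightarrow> 'h::{real_inner, second_countable_topology}"
  assumes "f \<in> L2H M" "g \<in> L2H M"
  shows "integrable M (\<lambda>z. inner (f z) (g z))"
proof -
  have [measurable]: "f \<in> borel_measurable M" "g \<in> borel_measurable M"
    and "integrable M (\<lambda>z. (norm (f z))\<^sup>2)" "integrable M (\<lambda>z. (norm (g z))\<^sup>2)"
    using assms by (auto simp: L2H_def)
  then have int: "integrable M (\<lambda>z. (norm (f z))\<^sup>2 + (norm (g z))\<^sup>2)" by simp
  have bound: "norm (inner (f z) (g z)) \<le> norm ((norm (f z))\<^sup>2 + (norm (g z))\<^sup>2)" for z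
  proof -
    have "\<bar>inner (f z) (g z)\<bar> \<le> norm (f z) * norm (g z)" by (rule Cauchy_Schwarz_ineq2)
    also have "\<dots> \<le> (norm (f z))\<^sup>2 + (norm (g z))\<^sup>2"
      using zero_le_power2[of "norm (f z) - norm (g z)"] by (simp add: power2_diff)
        (use mult_nonneg_nonneg[OF norm_ge_zero norm_ge_zero, of "f z" "g z"] in linarith)
    finally show ?thesis by simp
  qed
  show ?thesis
    by (rule Bochner_Integration.integrable_bound[OF int _ AE_I2[OF bound]]) measurable
qed

lemma L2H_inner_commute: "L2H_inner M f g = L2H_inner M g f"
  by (simp add: L2H_inner_def inner_commute)

lemma L2H_inner_add_left:
  fixes f g k :: "'z \<Rightarrow> 'h::{real_inner, second_countable_topology}"
  assumes "f \<in> L2H M" "g \<in> L2H M" "k \<in> L2H M"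
  shows "L2H_inner M (\<lambda>z. f z + g z) k = L2H_inner M f k + L2H_inner M g k"
  unfolding L2H_inner_def inner_add_left
  by (intro Bochner_Integration.integral_add L2H_inner_integrable assms)

lemma L2H_inner_diff_left:
  fixes f g k :: "'z \<Rightarrow> 'h::{real_inner, second_countable_topology}"
  assumes "f \<in> L2H M" "g \<in> L2H M" "k \<in> L2H M"
  shows "L2H_inner M (\<lambda>z. f z - g z) k = L2H_inner M f k - L2H_inner M g k"
  unfolding L2H_inner_def inner_diff_left
  by (intro Bochner_Integration.integral_diff L2H_inner_integrable assms)

lemma L2H_inner_add_right:
  fixes f g k :: "'z \<Rightarrow> 'h::{real_inner, second_countable_topology}"
  assumes "f \<in> L2H M" "g \<in> L2H M" "k \<in> L2H M"
  shows "L2H_inner M k (\<lambda>z. f z + g z) = L2H_inner M k f + L2H_inner M k g"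
  using L2H_inner_add_left[OF assms] by (simp add: L2H_inner_commute)

lemma L2H_inner_diff_right:
  fixes f g k :: "'z \<Rightarrow> 'h::{real_inner, second_countable_topology}"
  assumes "f \<in> L2H M" "g \<in> L2H M" "k \<in> L2H M"
  shows "L2H_inner M k (\<lambda>z. f z - g z) = L2H_inner M k f - L2H_inner M k g"
  using L2H_inner_diff_left[OF assms] by (simp add: L2H_inner_commute)

lemma L2H_inner_scaleR_right: "L2H_inner M k (\<lambda>z. c *\<^sub>R f z) = c * L2H_inner M k f"
  by (simp add: L2H_inner_def)

lemma L2Hnorm_nonneg: "L2Hnorm M f \<ge> 0"
  by (simp add: L2Hnorm_def)

lemma L2Hnorm_squared: "(L2Hnorm M f)\<^sup>2 = L2H_inner M f f"
  by (simp add: L2Hnorm_def L2H_inner_def power2_norm_eq_inner)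

lemma L2Hnorm_scaleR: "L2Hnorm M (\<lambda>z. c *\<^sub>R f z) = \<bar>c\<bar> * L2Hnorm M f"
  by (simp add: L2Hnorm_def power_mult_distrib real_sqrt_mult)

lemma L2Hnorm_minus_commute: "L2Hnorm M (\<lambda>z. f z - g z) = L2Hnorm M (\<lambda>z. g z - f z)"
  by (simp add: L2Hnorm_def norm_minus_commute)

lemma L2Hnorm_add_squared:
  fixes f g :: "'z \<Rightarrow> 'h::{real_inner, second_countable_topology}"
  assumes "f \<in> L2H M" "g \<in> L2H M"
  shows "(L2Hnorm M (\<lambda>z. f z + g z))\<^sup>2 = (L2Hnorm M f)\<^sup>2 + 2 * L2H_inner M f g + (L2Hnorm M g)\<^sup>2"
  using assms L2H_add[OF assms]
  by (simp add: L2Hnorm_squared L2H_inner_add_left L2H_inner_add_right L2H_inner_commute[of M g f])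

lemma L2Hnorm_diff_squared:
  fixes f g :: "'z \<Rightarrow> 'h::{real_inner, second_countable_topology}"
  assumes "f \<in> L2H M" "g \<in> L2H M"
  shows "(L2Hnorm M (\<lambda>z. f z - g z))\<^sup>2 = (L2Hnorm M f)\<^sup>2 - 2 * L2H_inner M f g + (L2Hnorm M g)\<^sup>2"
  using assms L2H_diff[OF assms]
  by (simp add: L2Hnorm_squared L2H_inner_diff_left L2H_inner_diff_right L2H_inner_commute[of M g f])

lemma nonneg_quadratic_discriminant:
  fixes a b c :: real
  assumes "c \<ge> 0" and nonneg: "\<And>t. 0 \<le> a - 2 * t * b + t\<^sup>2 * c"
  shows "b\<^sup>2 \<le> a * c"
proof (cases "c = 0")
  case True
  have "b = 0"
  proof (rule ccontr)
    assume "b \<noteq> 0"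
    then show False using nonneg[of "(a + 1) / (2 * b)"] True by (simp add: field_simps)
  qed
  then show ?thesis using True by simp
next
  case False
  then have "c > 0" using \<open>c \<ge> 0\<close> by simp
  then show ?thesis using nonneg[of "b / c"] by (simp add: field_simps power2_eq_square)
qed

lemma L2H_Cauchy_Schwarz:
  fixes f g :: "'z \<Rightarrow> 'h::{real_inner, second_countable_topology}"
  assumes "f \<in> L2H M" "g \<in> L2H M"
  shows "\<bar>L2H_inner M f g\<bar> \<le> L2Hnorm M f * L2Hnorm M g"
proof -
  have "0 \<le> (L2Hnorm M f)\<^sup>2 - 2 * t * L2H_inner M f g + t\<^sup>2 * (L2Hnorm M g)\<^sup>2" for t
    using L2Hnorm_diff_squared[OF assms(1) L2H_scaleR[OF assms(2), of t]]
      zero_le_power2[of "L2Hnorm M (\<lambda>z. f z - t *\<^sub>R g z)"]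
    by (simp add: L2Hnorm_scaleR L2H_inner_scaleR_right power_mult_distrib)
  then have "(L2H_inner M f g)\<^sup>2 \<le> (L2Hnorm M f * L2Hnorm M g)\<^sup>2"
    unfolding power_mult_distrib by (intro nonneg_quadratic_discriminant) simp_all
  then have "\<bar>L2H_inner M f g\<bar> \<le> \<bar>L2Hnorm M f * L2Hnorm M g\<bar>"
    by (simp add: abs_le_square_iff)
  then show ?thesis by (simp add: L2Hnorm_nonneg abs_mult)
qed

lemma L2Hnorm_triangle:
  fixes f g :: "'z \<Rightarrow> 'h::{real_inner, second_countable_topology}"
  assumes "f \<in> L2H M" "g \<in> L2H M"
  shows "L2Hnorm M (\<lambda>z. f z + g z) \<le> L2Hnorm M f + L2Hnorm M g"
proof (rule power2_le_imp_le)
  show "(L2Hnorm M (\<lambda>z. f z + g z))\<^sup>2 \<le> (L2Hnorm M f + L2Hnorm M g)\<^sup>2"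
    using L2H_Cauchy_Schwarz[OF assms]
    by (simp add: L2Hnorm_add_squared[OF assms] power2_sum)
qed (simp add: L2Hnorm_nonneg)

lemma L2Hnorm_triangle_diff:
  fixes f g k :: "'z \<Rightarrow> 'h::{real_inner, second_countable_topology}"
  assumes "f \<in> L2H M" "g \<in> L2H M" "k \<in> L2H M"
  shows "L2Hnorm M (\<lambda>z. f z - g z) \<le> L2Hnorm M (\<lambda>z. f z - k z) + L2Hnorm M (\<lambda>z. k z - g z)"
  using L2Hnorm_triangle[OF L2H_diff[OF assms(1,3)] L2H_diff[OF assms(3,2)]] by simp

section \<open>Completeness\<close>

lemma L2H_integral_le_L2Hnorm:
  fixes f :: "'z \<Rightarrow> real"
  assumes "prob_space M" "f \<in> L2H M"
  shows "integrable M f" "\<bar>\<integral>z. f z \<partial>M\<bar> \<le> L2Hnorm M f"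
proof -
  interpret prob_space M by fact
  have one: "(\<lambda>z. 1 :: real) \<in> L2H M" "L2Hnorm M (\<lambda>z. 1 :: real) = 1"
    by (simp_all add: L2H_def L2Hnorm_def prob_space)
  show "integrable M f"
    using L2H_inner_integrable[OF assms(2) one(1)] by simp
  show "\<bar>\<integral>z. f z \<partial>M\<bar> \<le> L2Hnorm M f"
    using L2H_Cauchy_Schwarz[OF assms(2) one(1)] by (simp add: L2H_inner_def one(2))
qed

lemma dist_le_sum_dist_Suc:
  fixes X :: "nat \<Rightarrow> 'a::metric_space"
  assumes "m \<le> n"
  shows "dist (X m) (X n) \<le> (\<Sum>i\<in>{m..<n}. dist (X i) (X (Suc i)))"
  using assms
proof (induction n rule: dec_induct)
  case (step n)
  have "dist (X m) (X (Suc n)) \<le> dist (X m) (X n) + dist (X n) (X (Suc n))"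
    by (rule dist_triangle)
  with step show ?case by simp
qed simp

lemma Cauchy_if_summable_dist_Suc:
  fixes X :: "nat \<Rightarrow> 'a::metric_space"
  assumes "summable (\<lambda>i. dist (X i) (X (Suc i)))"
  shows "Cauchy X"
proof (rule metric_CauchyI)
  fix e :: real assume "e > 0"
  then obtain N where N: "\<And>m n. m \<ge> N \<Longrightarrow> norm (\<Sum>i\<in>{m..<n}. dist (X i) (X (Suc i))) < e"
    using assms unfolding summable_Cauchy by blast
  have "dist (X m) (X n) < e" if "m \<ge> N" "n \<ge> N" for m n
  proof (cases "m \<le> n")
    case True
    then show ?thesis using dist_le_sum_dist_Suc[OF True, of X] N[OF \<open>m \<ge> N\<close>, of n] by simp
  next
    case False
    then show ?thesis
      using dist_le_sum_dist_Suc[of n m X] N[OF \<open>n \<ge> N\<close>, of m] by (simp add: dist_commute)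
  qed
  then show "\<exists>N. \<forall>m\<ge>N. \<forall>n\<ge>N. dist (X m) (X n) < e" by blast
qed

lemma AE_Cauchy_obtains_measurable_limit:
  fixes G :: "nat \<Rightarrow> 'z \<Rightarrow> 'h::{complete_space, second_countable_topology}"
  assumes [measurable]: "\<And>k. G k \<in> borel_measurable M" and "AE z in M. Cauchy (\<lambda>k. G k z)"
  obtains f where "f \<in> borel_measurable M" "AE z in M. (\<lambda>k. G k z) \<longlonglongrightarrow> f z"
proof
  \<comment> \<open>frozen off its Cauchy set, the sequence converges everywhere, so its limit is measurable\<close>
  define F where "F k z = (if Cauchy (\<lambda>k. G k z) then G k z else undefined)" for k z
  define f where "f z = (if Cauchy (\<lambda>k. G k z) then lim (\<lambda>k. G k z) else undefined)" for z
  have F_lim: "(\<lambda>k. F k z) \<longlonglongrightarrow> f z" for z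
    using Cauchy_convergent[of "\<lambda>k. G k z"] by (simp add: F_def f_def convergent_LIMSEQ_iff)
  have "F k \<in> borel_measurable M" for k
    unfolding F_def[abs_def] by measurable
  then show "f \<in> borel_measurable M"
    by (rule borel_measurable_LIMSEQ_metric[OF _ F_lim])
  show "AE z in M. (\<lambda>k. G k z) \<longlonglongrightarrow> f z"
    using assms(2)
  proof eventually_elim
    case (elim z)
    then show ?case using F_lim[of z] by (simp add: F_def)
  qed
qed

lemma nn_integral_norm_squared_L2H:
  assumes "f \<in> L2H M"
  shows "(\<integral>\<^sup>+z. ennreal ((norm (f z))\<^sup>2) \<partial>M) = ennreal ((L2Hnorm M f)\<^sup>2)"
  using assms by (simp add: L2H_def L2Hnorm_def nn_integral_eq_integral)

lemma L2H_geometric_steps_AE_Cauchy: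
  fixes G :: "nat \<Rightarrow> 'z \<Rightarrow> 'h::{real_inner, second_countable_topology}"
  assumes "prob_space M" "\<And>k. G k \<in> L2H M"
    and steps: "\<And>k. L2Hnorm M (\<lambda>z. G k z - G (Suc k) z) \<le> (1/2)^k"
  shows "AE z in M. Cauchy (\<lambda>k. G k z)"
proof -
  define d where "d k z = dist (G k z) (G (Suc k) z)" for k z
  have G_diff: "(\<lambda>z. G k z - G (Suc k) z) \<in> L2H M" for k
    by (rule L2H_diff[OF assms(2) assms(2)])
  have [measurable]: "G k \<in> borel_measurable M" for k
    using assms(2) by (rule L2H_borel_measurable)
  have [measurable]: "d k \<in> borel_measurable M" for k
    unfolding d_def by measurable
  have d_L2H: "d k \<in> L2H M" for k
    by (rule L2H_bound[OF _ G_diff[of k], of _ 1]) (simp_all add: d_def dist_norm)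
  have "(\<integral>\<^sup>+z. ennreal (d k z) \<partial>M) \<le> ennreal ((1/2)^k)" for k
  proof -
    have "(\<integral>z. d k z \<partial>M) \<le> L2Hnorm M (d k)"
      by (rule abs_le_D1[OF L2H_integral_le_L2Hnorm(2)[OF assms(1) d_L2H]])
    also have "\<dots> = L2Hnorm M (\<lambda>z. G k z - G (Suc k) z)"
      by (simp add: L2Hnorm_def d_def dist_norm)
    finally have "(\<integral>z. d k z \<partial>M) \<le> (1/2)^k"
      using steps[of k] by simp
    moreover have "(\<integral>\<^sup>+z. ennreal (d k z) \<partial>M) = ennreal (\<integral>z. d k z \<partial>M)"
      by (intro nn_integral_eq_integral L2H_integral_le_L2Hnorm(1)[OF assms(1) d_L2H])
        (simp add: d_def)
    ultimately show ?thesis by (simp add: ennreal_leI)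
  qed
  then have "(\<integral>\<^sup>+z. (\<Sum>k. ennreal (d k z)) \<partial>M) \<le> (\<Sum>k. ennreal ((1/2)^k))"
    by (simp add: nn_integral_suminf suminf_le)
  also have "\<dots> < \<infinity>"
    by (simp add: suminf_ennreal2)
  finally have "AE z in M. (\<Sum>k. ennreal (d k z)) \<noteq> \<infinity>"
    by (intro nn_integral_PInf_AE) simp_all
  then show ?thesis
  proof eventually_elim
    case (elim z)
    then have "summable (\<lambda>k. d k z)"
      by (intro summable_suminf_not_top) (simp_all add: d_def)
    then show ?case by (simp add: d_def Cauchy_if_summable_dist_Suc)
  qed
qed

lemma L2Hnorm_AE_limit_le:
  fixes G :: "nat \<Rightarrow> 'z \<Rightarrow> 'h::{real_normed_vector, second_countable_topology}"
  assumes "\<And>j. G j \<in> L2H M" "g \<in> L2H M" "f \<in> borel_measurable M"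
    and lim: "AE z in M. (\<lambda>j. G j z) \<longlonglongrightarrow> f z"
    and close: "eventually (\<lambda>j. L2Hnorm M (\<lambda>z. g z - G j z) \<le> c) sequentially"
  shows "(\<lambda>z. g z - f z) \<in> L2H M" "L2Hnorm M (\<lambda>z. g z - f z) \<le> c"
proof -
  have [measurable]: "G j \<in> borel_measurable M" "g \<in> borel_measurable M" "f \<in> borel_measurable M" for j
    using assms(1-3) by (simp_all add: L2H_borel_measurable)
  obtain N where "\<forall>j\<ge>N. L2Hnorm M (\<lambda>z. g z - G j z) \<le> c"
    using close by (auto simp: eventually_sequentially)
  then have "c \<ge> 0"
    by (meson L2Hnorm_nonneg order_refl order_trans)
  have "(\<integral>\<^sup>+z. ennreal ((norm (g z - f z))\<^sup>2) \<partial>M)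
      = (\<integral>\<^sup>+z. liminf (\<lambda>j. ennreal ((norm (g z - G j z))\<^sup>2)) \<partial>M)"
    using lim
  proof (intro nn_integral_cong_AE, eventually_elim)
    case (elim z)
    have "(\<lambda>j. ennreal ((norm (g z - G j z))\<^sup>2)) \<longlonglongrightarrow> ennreal ((norm (g z - f z))\<^sup>2)"
      by (intro tendsto_intros elim)
    then show ?case by (rule lim_imp_Liminf[OF trivial_limit_sequentially, symmetric])
  qed
  also have "\<dots> \<le> liminf (\<lambda>j. \<integral>\<^sup>+z. ennreal ((norm (g z - G j z))\<^sup>2) \<partial>M)"
    by (rule nn_integral_liminf) measurable
  also have "\<dots> \<le> ennreal (c\<^sup>2)"
  proof (rule Liminf_le)
    show "\<forall>\<^sub>F j in sequentially. (\<integral>\<^sup>+z. ennreal ((norm (g z - G j z))\<^sup>2) \<partial>M) \<le> ennreal (c\<^sup>2)"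
      using close
    proof eventually_elim
      case (elim j)
      then show ?case
        using L2H_diff[OF assms(2,1)] power_mono[OF elim L2Hnorm_nonneg, of 2]
        by (simp add: nn_integral_norm_squared_L2H ennreal_leI)
    qed
  qed simp
  finally have bound: "(\<integral>\<^sup>+z. ennreal ((norm (g z - f z))\<^sup>2) \<partial>M) \<le> ennreal (c\<^sup>2)" .
  then have "integrable M (\<lambda>z. (norm (g z - f z))\<^sup>2)"
    by (intro integrableI_nonneg) (auto simp: top.not_eq_extremum intro: le_less_trans)
  then show L2H: "(\<lambda>z. g z - f z) \<in> L2H M"
    by (simp add: L2H_def)
  have "(L2Hnorm M (\<lambda>z. g z - f z))\<^sup>2 \<le> c\<^sup>2"
    using bound \<open>c \<ge> 0\<close> by (simp add: nn_integral_norm_squared_L2H[OF L2H])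
  then show "L2Hnorm M (\<lambda>z. g z - f z) \<le> c"
    using \<open>c \<ge> 0\<close> by (simp add: power2_le_iff_abs_le)
qed

lemma L2H_geometric_Cauchy_limit:
  fixes G :: "nat \<Rightarrow> 'z \<Rightarrow> 'h::{real_inner, polish_space}"
  assumes "prob_space M" and G: "\<And>k. G k \<in> L2H M"
    and close: "\<And>k j. k \<le> j \<Longrightarrow> L2Hnorm M (\<lambda>z. G k z - G j z) \<le> (1/2)^k"
  obtains f where "f \<in> L2H M" "\<And>k. L2Hnorm M (\<lambda>z. G k z - f z) \<le> (1/2)^k"
proof -
  have "AE z in M. Cauchy (\<lambda>k. G k z)"
    by (rule L2H_geometric_steps_AE_Cauchy[OF assms(1) G close]) simp
  then obtain f where f_meas: "f \<in> borel_measurable M" and lim: "AE z in M. (\<lambda>k. G k z) \<longlonglongrightarrow> f z"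
    using AE_Cauchy_obtains_measurable_limit[of G M] G L2H_borel_measurable by blast
  have "eventually (\<lambda>j. L2Hnorm M (\<lambda>z. G k z - G j z) \<le> (1/2)^k) sequentially" for k
    using close by (auto simp: eventually_sequentially)
  then have f_close: "(\<lambda>z. G k z - f z) \<in> L2H M" "L2Hnorm M (\<lambda>z. G k z - f z) \<le> (1/2)^k" for k
    using L2Hnorm_AE_limit_le[OF G G f_meas lim] by blast+
  have "f \<in> L2H M"
    using L2H_diff[OF G f_close(1), of 0 0] by simp
  with f_close(2) show ?thesis
    using that by blast
qed

theorem L2H_complete:
  fixes g :: "nat \<Rightarrow> 'z \<Rightarrow> 'h::{real_inner, polish_space}"
  assumes "prob_space M" and g: "\<And>n. g n \<in> L2H M"
    and Cauchy: "\<And>\<epsilon>. \<epsilon> > 0 \<Longrightarrow> \<exists>N. \<forall>m\<ge>N. \<forall>n\<ge>N. L2Hnorm M (\<lambda>z. g m z - g n z) < \<epsilon>"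
  obtains f where "f \<in> L2H M" "(\<lambda>n. L2Hnorm M (\<lambda>z. g n z - f z)) \<longlonglongrightarrow> 0"
proof -
  have "\<forall>k. \<exists>N. \<forall>m\<ge>N. \<forall>n\<ge>N. L2Hnorm M (\<lambda>z. g m z - g n z) < (1/2)^k"
    using Cauchy by simp
  then obtain R where R: "\<And>k m n. m \<ge> R k \<Longrightarrow> n \<ge> R k \<Longrightarrow> L2Hnorm M (\<lambda>z. g m z - g n z) < (1/2)^k"
    by metis
  define r where "r k = (\<Sum>j\<le>k. R j)" for k
  have r_ge: "R k \<le> r j" if "k \<le> j" for k j
    unfolding r_def by (rule member_le_sum) (use that in auto)
  have G_close: "L2Hnorm M (\<lambda>z. g (r k) z - g n z) < (1/2)^k" if "n \<ge> R k" for k n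
    by (rule R) (use that r_ge[of k k] in auto)
  have "L2Hnorm M (\<lambda>z. g (r k) z - g (r j) z) \<le> (1/2)^k" if "k \<le> j" for k j
    using G_close[OF r_ge[OF that]] by simp
  then obtain f where f: "f \<in> L2H M" and f_close: "\<And>k. L2Hnorm M (\<lambda>z. g (r k) z - f z) \<le> (1/2)^k"
    using L2H_geometric_Cauchy_limit[of M "\<lambda>k. g (r k)"] assms(1) g by blast
  show ?thesis
  proof (rule that[OF f], rule LIMSEQ_I)
    fix \<epsilon> :: real assume "\<epsilon> > 0"
    then obtain k where k: "(1/2)^k < \<epsilon>/2"
      using real_arch_pow_inv[of "\<epsilon>/2" "1/2"] by auto
    have "L2Hnorm M (\<lambda>z. g n z - f z) < \<epsilon>" if "n \<ge> R k" for n
    proof -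
      have "L2Hnorm M (\<lambda>z. g n z - f z) \<le> L2Hnorm M (\<lambda>z. g n z - g (r k) z) + L2Hnorm M (\<lambda>z. g (r k) z - f z)"
        by (rule L2Hnorm_triangle_diff[OF g f g])
      also have "\<dots> < \<epsilon>"
        using G_close[OF that] f_close[of k] k by (simp add: L2Hnorm_minus_commute[of M "g n"])
      finally show ?thesis .
    qed
    then show "\<exists>N. \<forall>n\<ge>N. norm (L2Hnorm M (\<lambda>z. g n z - f z) - 0) < \<epsilon>"
      by (auto simp: L2Hnorm_nonneg)
  qed
qed

section \<open>Orthogonal projection onto closed subspaces\<close>

definition L2H_closed_subspace :: "'z measure \<Rightarrow> ('z \<Rightarrow> 'h::real_normed_vector) set \<Rightarrow> bool" where
  "L2H_closed_subspace M S \<longleftrightarrow> S \<subseteq> L2H M \<and> (\<lambda>z. 0) \<in> S \<and>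
     (\<forall>f\<in>S. \<forall>g\<in>S. (\<lambda>z. f z + g z) \<in> S) \<and> (\<forall>c. \<forall>f\<in>S. (\<lambda>z. c *\<^sub>R f z) \<in> S) \<and>
     (\<forall>f\<in>L2H M. (\<forall>\<epsilon>>0. \<exists>g\<in>S. L2Hnorm M (\<lambda>z. f z - g z) < \<epsilon>) \<longrightarrow> f \<in> S)"

context
  fixes M :: "'z measure" and S :: "('z \<Rightarrow> 'h::real_normed_vector) set"
  assumes S: "L2H_closed_subspace M S"
begin

lemma L2H_closed_subspace_L2H: "f \<in> S \<Longrightarrow> f \<in> L2H M"
  using S by (auto simp: L2H_closed_subspace_def)

lemma L2H_closed_subspace_zero: "(\<lambda>z. 0) \<in> S"
  using S by (simp add: L2H_closed_subspace_def)

lemma L2H_closed_subspace_add: "f \<in> S \<Longrightarrow> g \<in> S \<Longrightarrow> (\<lambda>z. f z + g z) \<in> S"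
  using S by (simp add: L2H_closed_subspace_def)

lemma L2H_closed_subspace_scaleR: "f \<in> S \<Longrightarrow> (\<lambda>z. c *\<^sub>R f z) \<in> S"
  using S by (simp add: L2H_closed_subspace_def)

lemma L2H_closed_subspace_sum: "(\<And>i. i \<in> I \<Longrightarrow> f i \<in> S) \<Longrightarrow> (\<lambda>z. \<Sum>i\<in>I. f i z) \<in> S"
proof (induction I rule: infinite_finite_induct)
  case (insert i I)
  then show ?case using L2H_closed_subspace_add[of "f i" "\<lambda>z. \<Sum>i\<in>I. f i z"] by simp
qed (simp_all add: L2H_closed_subspace_zero)

lemma L2H_closed_subspace_approx:
  "f \<in> L2H M \<Longrightarrow> (\<And>\<epsilon>. \<epsilon> > 0 \<Longrightarrow> \<exists>g\<in>S. L2Hnorm M (\<lambda>z. f z - g z) < \<epsilon>) \<Longrightarrow> f \<in> S"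
  using S by (simp add: L2H_closed_subspace_def)

lemma L2H_closed_subspace_limit:
  assumes g: "\<And>n. g n \<in> S" and f: "f \<in> L2H M"
    and lim: "(\<lambda>n. L2Hnorm M (\<lambda>z. g n z - f z)) \<longlonglongrightarrow> 0"
  shows "f \<in> S"
proof (rule L2H_closed_subspace_approx[OF f])
  fix \<epsilon> :: real assume "\<epsilon> > 0"
  then obtain N where "\<forall>n\<ge>N. norm (L2Hnorm M (\<lambda>z. g n z - f z) - 0) < \<epsilon>"
    using LIMSEQ_D[OF lim] by blast
  then have "L2Hnorm M (\<lambda>z. f z - g N z) < \<epsilon>"
    by (simp add: L2Hnorm_minus_commute[of M f] L2Hnorm_nonneg)
  then show "\<exists>k\<in>S. L2Hnorm M (\<lambda>z. f z - k z) < \<epsilon>"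
    using g by blast
qed

end

lemma L2Hnorm_parallelogram:
  fixes u v :: "'z \<Rightarrow> 'h::{real_inner, second_countable_topology}"
  assumes "u \<in> L2H M" "v \<in> L2H M"
  shows "(L2Hnorm M (\<lambda>z. u z - v z))\<^sup>2 + (L2Hnorm M (\<lambda>z. u z + v z))\<^sup>2
       = 2 * (L2Hnorm M u)\<^sup>2 + 2 * (L2Hnorm M v)\<^sup>2"
  by (simp add: L2Hnorm_add_squared[OF assms] L2Hnorm_diff_squared[OF assms])

lemma L2H_minimizing_sequence_Cauchy:
  fixes g :: "nat \<Rightarrow> 'z \<Rightarrow> 'h::{real_inner, second_countable_topology}"
  assumes g: "\<And>n. g n \<in> L2H M" and f: "f \<in> L2H M"
    and mid: "\<And>m n. \<delta> \<le> L2Hnorm M (\<lambda>z. f z - (1/2) *\<^sub>R (g m z + g n z))"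
    and lim: "(\<lambda>n. L2Hnorm M (\<lambda>z. f z - g n z)) \<longlonglongrightarrow> \<delta>"
    and "\<epsilon> > 0"
  shows "\<exists>N. \<forall>m\<ge>N. \<forall>n\<ge>N. L2Hnorm M (\<lambda>z. g m z - g n z) < \<epsilon>"
proof -
  define a where "a n = L2Hnorm M (\<lambda>z. f z - g n z)" for n
  have "\<delta> \<ge> 0"
    by (rule LIMSEQ_le_const[OF lim]) (simp add: L2Hnorm_nonneg)
  have "(\<lambda>n. (a n)\<^sup>2) \<longlonglongrightarrow> \<delta>\<^sup>2"
    unfolding a_def by (intro tendsto_intros lim)
  then have "eventually (\<lambda>n. (a n)\<^sup>2 < \<delta>\<^sup>2 + \<epsilon>\<^sup>2 / 4) sequentially"
    by (rule order_tendstoD) (use \<open>\<epsilon> > 0\<close> in simp)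
  then obtain N where N: "\<And>n. n \<ge> N \<Longrightarrow> (a n)\<^sup>2 < \<delta>\<^sup>2 + \<epsilon>\<^sup>2 / 4"
    by (auto simp: eventually_sequentially)
  have "L2Hnorm M (\<lambda>z. g m z - g n z) < \<epsilon>" if "m \<ge> N" "n \<ge> N" for m n
  proof -
    define u where "u z = f z - g n z" for z
    define v where "v z = f z - g m z" for z
    have uv: "u \<in> L2H M" "v \<in> L2H M"
      unfolding u_def[abs_def] v_def[abs_def] by (simp_all add: L2H_diff f g)
    have "(\<lambda>z. u z + v z) = (\<lambda>z. 2 *\<^sub>R (f z - (1/2) *\<^sub>R (g m z + g n z)))"
      by (auto simp: u_def v_def algebra_simps scaleR_2)
    then have "(L2Hnorm M (\<lambda>z. u z + v z))\<^sup>2 \<ge> 4 * \<delta>\<^sup>2"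
      using power_mono[OF mid[of m n] \<open>\<delta> \<ge> 0\<close>, of 2] by (simp add: L2Hnorm_scaleR power_mult_distrib)
    moreover have "(\<lambda>z. u z - v z) = (\<lambda>z. g m z - g n z)"
      by (auto simp: u_def v_def)
    ultimately have "(L2Hnorm M (\<lambda>z. g m z - g n z))\<^sup>2 \<le> 2 * (a n)\<^sup>2 + 2 * (a m)\<^sup>2 - 4 * \<delta>\<^sup>2"
      using L2Hnorm_parallelogram[OF uv] by (simp add: a_def u_def[abs_def] v_def[abs_def])
    also have "\<dots> < \<epsilon>\<^sup>2"
      using N[OF that(1)] N[OF that(2)] by simp
    finally show ?thesis
      using \<open>\<epsilon> > 0\<close> by (simp add: power2_less_imp_less)
  qed
  then show ?thesis by blast
qed

lemma Inf_image_minimizing_sequence: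
  fixes F :: "'a \<Rightarrow> real"
  assumes "S \<noteq> {}" "bdd_below (F ` S)"
  obtains x where "\<And>n. x n \<in> S" "(\<lambda>n. F (x n)) \<longlonglongrightarrow> Inf (F ` S)"
proof -
  have "Inf (F ` S) \<in> closure (F ` S)"
    using assms by (intro closure_contains_Inf) simp_all
  then obtain y where y: "\<And>n. y n \<in> F ` S" "y \<longlonglongrightarrow> Inf (F ` S)"
    unfolding closure_sequential by blast
  then have "\<forall>n. \<exists>x. x \<in> S \<and> y n = F x"
    by blast
  from choice[OF this] obtain x where "\<And>n. x n \<in> S" "y = (\<lambda>n. F (x n))"
    by auto
  with y(2) show ?thesis
    using that by blast
qed

lemma L2H_nearest_point_exists:
  fixes f :: "'z \<Rightarrow> 'h::{real_inner, polish_space}"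
  assumes "prob_space M" and S: "L2H_closed_subspace M S" and f: "f \<in> L2H M"
  obtains g where "g \<in> S" "\<And>k. k \<in> S \<Longrightarrow> L2Hnorm M (\<lambda>z. f z - g z) \<le> L2Hnorm M (\<lambda>z. f z - k z)"
proof -
  define dist_f where "dist_f k = L2Hnorm M (\<lambda>z. f z - k z)" for k
  define \<delta> where "\<delta> = Inf (dist_f ` S)"
  have S_bdd: "bdd_below (dist_f ` S)"
    by (rule bdd_belowI[of _ 0]) (auto simp: dist_f_def L2Hnorm_nonneg)
  have \<delta>_le: "\<delta> \<le> dist_f k" if "k \<in> S" for k
    unfolding \<delta>_def using S_bdd that by (simp add: cInf_lower)
  obtain g where gS: "\<And>n. g n \<in> S" and lim: "(\<lambda>n. dist_f (g n)) \<longlonglongrightarrow> \<delta>"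
    using Inf_image_minimizing_sequence[OF _ S_bdd] L2H_closed_subspace_zero[OF S]
    unfolding \<delta>_def by blast
  have g: "g n \<in> L2H M" for n
    using gS by (rule L2H_closed_subspace_L2H[OF S])
  have Cauchy: "\<exists>N. \<forall>m\<ge>N. \<forall>n\<ge>N. L2Hnorm M (\<lambda>z. g m z - g n z) < \<epsilon>" if "\<epsilon> > 0" for \<epsilon>
  proof (rule L2H_minimizing_sequence_Cauchy[OF g f _ _ that])
    fix m n
    have "(\<lambda>z. (1/2) *\<^sub>R (g m z + g n z)) \<in> S"
      by (intro L2H_closed_subspace_scaleR[OF S] L2H_closed_subspace_add[OF S] gS)
    then show "\<delta> \<le> L2Hnorm M (\<lambda>z. f z - (1/2) *\<^sub>R (g m z + g n z))"
      using \<delta>_le by (simp add: dist_f_def)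
  qed (use lim in \<open>simp add: dist_f_def\<close>)
  then obtain g0 where g0: "g0 \<in> L2H M" and g_g0: "(\<lambda>n. L2Hnorm M (\<lambda>z. g n z - g0 z)) \<longlonglongrightarrow> 0"
    using L2H_complete[OF assms(1) g Cauchy] by blast
  have "dist_f g0 \<le> \<delta>"
  proof (rule LIMSEQ_le_const)
    show "(\<lambda>n. dist_f (g n) + L2Hnorm M (\<lambda>z. g n z - g0 z)) \<longlonglongrightarrow> \<delta>"
      using tendsto_add[OF lim g_g0] by simp
    have "dist_f g0 \<le> dist_f (g n) + L2Hnorm M (\<lambda>z. g n z - g0 z)" for n
      unfolding dist_f_def by (rule L2Hnorm_triangle_diff[OF f g0 g])
    then show "\<exists>N. \<forall>n\<ge>N. dist_f g0 \<le> dist_f (g n) + L2Hnorm M (\<lambda>z. g n z - g0 z)"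
      by blast
  qed
  with L2H_closed_subspace_limit[OF S gS g0 g_g0] show ?thesis
    using that \<delta>_le unfolding dist_f_def by fastforce
qed

lemma L2H_nearest_point_is_orth_proj:
  fixes f :: "'z \<Rightarrow> 'h::{real_inner, second_countable_topology}"
  assumes S: "L2H_closed_subspace M S" and f: "f \<in> L2H M" and "g \<in> S"
    and nearest: "\<And>k. k \<in> S \<Longrightarrow> L2Hnorm M (\<lambda>z. f z - g z) \<le> L2Hnorm M (\<lambda>z. f z - k z)"
  shows "is_orth_proj M S f g"
  unfolding is_orth_proj_def
proof (intro conjI ballI)
  fix k assume "k \<in> S"
  define u where "u z = f z - g z" for z
  have u: "u \<in> L2H M" and k: "k \<in> L2H M"
    unfolding u_def[abs_def] using \<open>g \<in> S\<close> \<open>k \<in> S\<close> f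
    by (simp_all add: L2H_diff L2H_closed_subspace_L2H[OF S])
  \<comment> \<open>the distance from f to the line g + t k is minimal at t = 0\<close>
  have "0 \<le> 0 - 2 * t * L2H_inner M u k + t\<^sup>2 * (L2Hnorm M k)\<^sup>2" for t
  proof -
    have line: "(\<lambda>z. g z + t *\<^sub>R k z) \<in> S"
      using \<open>g \<in> S\<close> \<open>k \<in> S\<close> by (simp add: L2H_closed_subspace_add[OF S] L2H_closed_subspace_scaleR[OF S])
    have "L2Hnorm M u \<le> L2Hnorm M (\<lambda>z. u z - t *\<^sub>R k z)"
      using nearest[OF line] by (simp add: u_def[abs_def] diff_diff_eq)
    then have "(L2Hnorm M u)\<^sup>2 \<le> (L2Hnorm M (\<lambda>z. u z - t *\<^sub>R k z))\<^sup>2"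
      using L2Hnorm_nonneg by (rule power_mono)
    then show ?thesis
      by (simp add: L2Hnorm_diff_squared[OF u L2H_scaleR[OF k]] L2Hnorm_scaleR
          L2H_inner_scaleR_right power_mult_distrib)
  qed
  then have "(L2H_inner M u k)\<^sup>2 \<le> 0 * (L2Hnorm M k)\<^sup>2"
    by (intro nonneg_quadratic_discriminant) simp_all
  then show "(\<integral>z. inner (f z - g z) (k z) \<partial>M) = 0"
    by (simp add: L2H_inner_def u_def)
qed (rule \<open>g \<in> S\<close>)

theorem L2H_orth_proj_exists:
  fixes f :: "'z \<Rightarrow> 'h::{real_inner, polish_space}"
  assumes "prob_space M" "L2H_closed_subspace M S" "f \<in> L2H M"
  shows "\<exists>g. is_orth_proj M S f g"
  using L2H_nearest_point_exists[OF assms] L2H_nearest_point_is_orth_proj[OF assms(2,3)] by metis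

section \<open>Closures of spans\<close>

definition L2H_sum_closure :: "'z measure \<Rightarrow> ('z \<Rightarrow> 'h::real_normed_vector) set \<Rightarrow> ('z \<Rightarrow> 'h) set" where
  "L2H_sum_closure M B = {f \<in> L2H M. \<forall>\<epsilon>>0. \<exists>(n::nat) a. (\<forall>i<n. a i \<in> B) \<and>
     L2Hnorm M (\<lambda>z. f z - (\<Sum>i<n. a i z)) < \<epsilon>}"

lemma sum_lessThan_append:
  fixes a b :: "nat \<Rightarrow> 'a::comm_monoid_add"
  shows "(\<Sum>i<m + n. if i < m then a i else b (i - m)) = (\<Sum>i<m. a i) + (\<Sum>i<n. b i)"
proof (induction n)
  case 0
  have "(\<Sum>i<m. if i < m then a i else b (i - m)) = (\<Sum>i<m. a i)"
    by (rule sum.cong) simp_all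
  then show ?case by simp
qed (simp add: add.assoc)

context
  fixes M :: "'z measure" and B :: "('z \<Rightarrow> 'h::{real_inner, second_countable_topology}) set"
  assumes B_L2H: "B \<subseteq> L2H M" and B_cone: "\<And>b c. b \<in> B \<Longrightarrow> (\<lambda>z. c *\<^sub>R b z) \<in> B"
begin

lemma L2H_sum_closure_approx:
  assumes "f \<in> L2H_sum_closure M B" "\<epsilon> > 0"
  obtains n :: nat and a where "\<forall>i<n. a i \<in> B" "L2Hnorm M (\<lambda>z. f z - (\<Sum>i<n. a i z)) < \<epsilon>"
  using assms by (auto simp: L2H_sum_closure_def)

lemma L2H_sum_of_generators: "\<forall>i<n. a i \<in> B \<Longrightarrow> (\<lambda>z. \<Sum>i<n. a i z) \<in> L2H M"
  using B_L2H by (intro L2H_sum) auto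

lemma L2H_sum_closure_add:
  assumes f: "f \<in> L2H_sum_closure M B" and g: "g \<in> L2H_sum_closure M B"
  shows "(\<lambda>z. f z + g z) \<in> L2H_sum_closure M B"
  unfolding L2H_sum_closure_def
proof (intro CollectI conjI allI impI)
  show "(\<lambda>z. f z + g z) \<in> L2H M"
    using f g by (simp add: L2H_sum_closure_def L2H_add)
  fix \<epsilon> :: real assume "\<epsilon> > 0"
  obtain m :: nat and a where a: "\<forall>i<m. a i \<in> B" "L2Hnorm M (\<lambda>z. f z - (\<Sum>i<m. a i z)) < \<epsilon>/2"
    by (rule L2H_sum_closure_approx[OF f half_gt_zero[OF \<open>\<epsilon> > 0\<close>]])
  obtain n :: nat and b where b: "\<forall>i<n. b i \<in> B" "L2Hnorm M (\<lambda>z. g z - (\<Sum>i<n. b i z)) < \<epsilon>/2"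
    by (rule L2H_sum_closure_approx[OF g half_gt_zero[OF \<open>\<epsilon> > 0\<close>]])
  define c where "c i z = (if i < m then a i z else b (i - m) z)" for i z
  have "c i = (if i < m then a i else b (i - m))" for i
    by (simp add: c_def fun_eq_iff)
  then have cB: "\<forall>i<m + n. c i \<in> B"
    using a(1) b(1) by auto
  have "(\<Sum>i<m + n. c i z) = (\<Sum>i<m. a i z) + (\<Sum>i<n. b i z)" for z
    unfolding c_def by (rule sum_lessThan_append)
  then have "L2Hnorm M (\<lambda>z. f z + g z - (\<Sum>i<m + n. c i z))
      = L2Hnorm M (\<lambda>z. (f z - (\<Sum>i<m. a i z)) + (g z - (\<Sum>i<n. b i z)))"
    by (simp add: algebra_simps)
  also have "\<dots> \<le> L2Hnorm M (\<lambda>z. f z - (\<Sum>i<m. a i z)) + L2Hnorm M (\<lambda>z. g z - (\<Sum>i<n. b i z))"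
    using f g a(1) b(1)
    by (intro L2Hnorm_triangle L2H_diff L2H_sum_of_generators) (simp_all add: L2H_sum_closure_def)
  also have "\<dots> < \<epsilon>"
    using a(2) b(2) by simp
  finally show "\<exists>(n::nat) a. (\<forall>i<n. a i \<in> B) \<and> L2Hnorm M (\<lambda>z. f z + g z - (\<Sum>i<n. a i z)) < \<epsilon>"
    using cB by (intro exI[of _ "m + n"] exI[of _ c] conjI)
qed

lemma L2H_sum_closure_scaleR:
  assumes f: "f \<in> L2H_sum_closure M B"
  shows "(\<lambda>z. c *\<^sub>R f z) \<in> L2H_sum_closure M B"
  unfolding L2H_sum_closure_def
proof (intro CollectI conjI allI impI)
  show "(\<lambda>z. c *\<^sub>R f z) \<in> L2H M"
    using f by (simp add: L2H_sum_closure_def L2H_scaleR)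
  fix \<epsilon> :: real assume "\<epsilon> > 0"
  then have "\<epsilon> / (\<bar>c\<bar> + 1) > 0"
    by simp
  then obtain n :: nat and a where a: "\<forall>i<n. a i \<in> B" "L2Hnorm M (\<lambda>z. f z - (\<Sum>i<n. a i z)) < \<epsilon> / (\<bar>c\<bar> + 1)"
    by (rule L2H_sum_closure_approx[OF f])
  have "L2Hnorm M (\<lambda>z. c *\<^sub>R f z - (\<Sum>i<n. c *\<^sub>R a i z))
      = \<bar>c\<bar> * L2Hnorm M (\<lambda>z. f z - (\<Sum>i<n. a i z))"
    by (simp add: L2Hnorm_scaleR[symmetric] scaleR_diff_right scaleR_sum_right)
  also have "\<dots> \<le> \<bar>c\<bar> * (\<epsilon> / (\<bar>c\<bar> + 1))"
    using a(2) by (intro mult_left_mono) simp_all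
  also have "\<dots> < \<epsilon>"
    using \<open>\<epsilon> > 0\<close> by (simp add: field_simps)
  finally show "\<exists>(n::nat) a. (\<forall>i<n. a i \<in> B) \<and> L2Hnorm M (\<lambda>z. c *\<^sub>R f z - (\<Sum>i<n. a i z)) < \<epsilon>"
    using a(1) B_cone by (intro exI[of _ n] exI[of _ "\<lambda>i z. c *\<^sub>R a i z"]) simp
qed

lemma L2H_sum_closure_closed:
  assumes f: "f \<in> L2H M" and approx: "\<And>\<epsilon>. \<epsilon> > 0 \<Longrightarrow> \<exists>g\<in>L2H_sum_closure M B. L2Hnorm M (\<lambda>z. f z - g z) < \<epsilon>"
  shows "f \<in> L2H_sum_closure M B"
  unfolding L2H_sum_closure_def
proof (intro CollectI conjI allI impI f)
  fix \<epsilon> :: real assume "\<epsilon> > 0"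
  then obtain g where g: "g \<in> L2H_sum_closure M B" "L2Hnorm M (\<lambda>z. f z - g z) < \<epsilon>/2"
    using approx[of "\<epsilon>/2"] by auto
  obtain n :: nat and a where a: "\<forall>i<n. a i \<in> B" "L2Hnorm M (\<lambda>z. g z - (\<Sum>i<n. a i z)) < \<epsilon>/2"
    by (rule L2H_sum_closure_approx[OF g(1) half_gt_zero[OF \<open>\<epsilon> > 0\<close>]])
  have "L2Hnorm M (\<lambda>z. f z - (\<Sum>i<n. a i z))
      \<le> L2Hnorm M (\<lambda>z. f z - g z) + L2Hnorm M (\<lambda>z. g z - (\<Sum>i<n. a i z))"
    using g(1) by (intro L2Hnorm_triangle_diff f L2H_sum_of_generators a(1)) (simp add: L2H_sum_closure_def)
  also have "\<dots> < \<epsilon>"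
    using g(2) a(2) by simp
  finally show "\<exists>(n::nat) a. (\<forall>i<n. a i \<in> B) \<and> L2Hnorm M (\<lambda>z. f z - (\<Sum>i<n. a i z)) < \<epsilon>"
    using a(1) by (intro exI[of _ n] exI[of _ a] conjI)
qed

lemma L2H_sum_closure_zero: "(\<lambda>z. 0) \<in> L2H_sum_closure M B"
  by (auto simp: L2H_sum_closure_def L2H_zero L2Hnorm_def intro!: exI[of _ "0::nat"])

lemma L2H_sum_closure_closed_subspace: "L2H_closed_subspace M (L2H_sum_closure M B)"
  unfolding L2H_closed_subspace_def
proof (intro conjI ballI allI impI)
  show "L2H_sum_closure M B \<subseteq> L2H M"
    by (auto simp: L2H_sum_closure_def)
  show "f \<in> L2H_sum_closure M B"
    if "f \<in> L2H M" "\<forall>\<epsilon>>0. \<exists>g\<in>L2H_sum_closure M B. L2Hnorm M (\<lambda>z. f z - g z) < \<epsilon>" for f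
    using that by (intro L2H_sum_closure_closed) auto
qed (fact L2H_sum_closure_zero L2H_sum_closure_add L2H_sum_closure_scaleR)+

lemma L2H_sum_closure_base: "b \<in> B \<Longrightarrow> b \<in> L2H_sum_closure M B"
  using B_L2H by (auto simp: L2H_sum_closure_def L2Hnorm_def intro!: exI[of _ "1::nat"] exI[of _ "\<lambda>_. b"])

lemma L2H_sum_closure_inner_mem:
  assumes T: "L2H_closed_subspace M T" and f: "f \<in> L2H_sum_closure M B"
    and gen: "\<And>b. b \<in> B \<Longrightarrow> (\<lambda>z. inner h (b z)) \<in> T"
  shows "(\<lambda>z. inner h (f z)) \<in> T"
proof (rule L2H_closed_subspace_approx[OF T])
  have f_L2H: "f \<in> L2H M"
    using f by (simp add: L2H_sum_closure_def)
  then show "(\<lambda>z. inner h (f z)) \<in> L2H M"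
    by (rule L2H_inner_left)
  fix \<epsilon> :: real assume "\<epsilon> > 0"
  have h1: "norm h + 1 > 0"
    using norm_ge_zero[of h] by linarith
  with \<open>\<epsilon> > 0\<close> have "\<epsilon> / (norm h + 1) > 0"
    by simp
  then obtain n :: nat and a where a: "\<forall>i<n. a i \<in> B" "L2Hnorm M (\<lambda>z. f z - (\<Sum>i<n. a i z)) < \<epsilon> / (norm h + 1)"
    by (rule L2H_sum_closure_approx[OF f])
  have mem: "(\<lambda>z. \<Sum>i<n. inner h (a i z)) \<in> T"
    using a(1) by (intro L2H_closed_subspace_sum[OF T] gen) simp
  have close: "L2Hnorm M (\<lambda>z. inner h (f z) - (\<Sum>i<n. inner h (a i z))) < \<epsilon>"
  proof -
    have "L2Hnorm M (\<lambda>z. inner h (f z) - (\<Sum>i<n. inner h (a i z)))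
        = L2Hnorm M (\<lambda>z. inner h (f z - (\<Sum>i<n. a i z)))"
      by (simp add: inner_diff_right inner_sum_right)
    also have "\<dots> \<le> norm h * L2Hnorm M (\<lambda>z. f z - (\<Sum>i<n. a i z))"
      by (intro L2Hnorm_inner_left_le L2H_diff f_L2H L2H_sum_of_generators a(1))
    also have "\<dots> \<le> norm h * (\<epsilon> / (norm h + 1))"
      using a(2) by (intro mult_left_mono) simp_all
    also have "\<dots> < \<epsilon>"
      using \<open>\<epsilon> > 0\<close> h1 by (simp add: field_simps)
    finally show ?thesis .
  qed
  show "\<exists>g\<in>T. L2Hnorm M (\<lambda>z. inner h (f z) - g z) < \<epsilon>"
    using close by (intro bexI[OF _ mem])
qed

end

lemma L2H_sum_closure_subset:
  fixes B :: "('z \<Rightarrow> 'h::{real_inner, second_countable_topology}) set"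
  assumes T: "L2H_closed_subspace M T" and "B \<subseteq> T"
  shows "L2H_sum_closure M B \<subseteq> T"
proof
  fix f assume f: "f \<in> L2H_sum_closure M B"
  show "f \<in> T"
  proof (rule L2H_closed_subspace_approx[OF T])
    show "f \<in> L2H M"
      using f by (simp add: L2H_sum_closure_def)
    fix \<epsilon> :: real assume "\<epsilon> > 0"
    then obtain n :: nat and a where a: "\<forall>i<n. a i \<in> B" "L2Hnorm M (\<lambda>z. f z - (\<Sum>i<n. a i z)) < \<epsilon>"
      using f by (auto simp: L2H_sum_closure_def)
    have "(\<lambda>z. \<Sum>i<n. a i z) \<in> T"
      using a(1) \<open>B \<subseteq> T\<close> by (intro L2H_closed_subspace_sum[OF T]) auto
    then show "\<exists>g\<in>T. L2Hnorm M (\<lambda>z. f z - g z) < \<epsilon>"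
      using a(2) by (intro bexI)
  qed
qed

section \<open>Scores have mean zero\<close>

lemma L2H_unit_vectors_inner_bound:
  fixes a u b :: "'z \<Rightarrow> 'h::{real_inner, second_countable_topology}"
  assumes a: "a \<in> L2H M" "L2Hnorm M a = 1" and u: "u \<in> L2H M"
    and b: "b \<in> L2H M" "L2Hnorm M b = 1" and "e \<noteq> 0"
  defines "\<rho> \<equiv> L2Hnorm M (\<lambda>z. b z - a z - e *\<^sub>R u z) / \<bar>e\<bar>"
  shows "\<bar>L2H_inner M a u\<bar> \<le> \<rho> + \<bar>e\<bar> * (L2Hnorm M u + \<rho>)\<^sup>2 / 2"
proof -
  define r where "r z = b z - a z - e *\<^sub>R u z" for z
  define w where "w z = e *\<^sub>R u z + r z" for z
  have r: "r \<in> L2H M"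
    unfolding r_def[abs_def] by (intro L2H_diff L2H_scaleR a(1) b(1) u)
  have w: "w \<in> L2H M"
    unfolding w_def[abs_def] by (intro L2H_add L2H_scaleR u r)
  have r_norm: "L2Hnorm M r = \<bar>e\<bar> * \<rho>"
    using \<open>e \<noteq> 0\<close> by (simp add: \<rho>_def r_def[abs_def])
  have "L2Hnorm M w \<le> \<bar>e\<bar> * (L2Hnorm M u + \<rho>)"
    using L2Hnorm_triangle[OF L2H_scaleR[OF u] r]
    by (simp add: w_def[abs_def] L2Hnorm_scaleR r_norm algebra_simps)
  then have w_bound: "(L2Hnorm M w)\<^sup>2 \<le> (\<bar>e\<bar> * (L2Hnorm M u + \<rho>))\<^sup>2"
    by (rule power_mono) (simp add: L2Hnorm_nonneg)
  \<comment> \<open>b = a + w is a unit vector, so expanding its squared norm isolates e times the inner product\<close>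
  have "1 = (L2Hnorm M (\<lambda>z. a z + w z))\<^sup>2"
    using b(2) by (simp add: w_def r_def)
  also have "\<dots> = 1 + 2 * L2H_inner M a w + (L2Hnorm M w)\<^sup>2"
    by (simp add: L2Hnorm_add_squared[OF a(1) w] a(2))
  also have "L2H_inner M a w = e * L2H_inner M a u + L2H_inner M a r"
    unfolding w_def[abs_def] using L2H_inner_add_right[OF L2H_scaleR[OF u] r a(1)]
    by (simp add: L2H_inner_scaleR_right)
  finally have "2 * e * L2H_inner M a u = - ((L2Hnorm M w)\<^sup>2 + 2 * L2H_inner M a r)"
    by (simp add: algebra_simps)
  then have "2 * \<bar>e\<bar> * \<bar>L2H_inner M a u\<bar> = \<bar>(L2Hnorm M w)\<^sup>2 + 2 * L2H_inner M a r\<bar>"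
    by (metis abs_minus_cancel abs_mult abs_numeral)
  also have "\<dots> \<le> (L2Hnorm M w)\<^sup>2 + 2 * L2Hnorm M r"
    using abs_triangle_ineq[of "(L2Hnorm M w)\<^sup>2" "2 * L2H_inner M a r"]
      L2H_Cauchy_Schwarz[OF a(1) r] a(2) by simp
  also have "\<dots> \<le> (\<bar>e\<bar> * (L2Hnorm M u + \<rho>))\<^sup>2 + 2 * (\<bar>e\<bar> * \<rho>)"
    using w_bound r_norm by simp
  also have "\<dots> = (2 * \<bar>e\<bar>) * (\<rho> + \<bar>e\<bar> * (L2Hnorm M u + \<rho>)\<^sup>2 / 2)"
    by (simp add: power2_eq_square algebra_simps)
  finally show ?thesis
    using \<open>e \<noteq> 0\<close> by (simp add: mult_le_cancel_left_pos)
qed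

lemma L2H_unit_sphere_curve_orthogonal:
  fixes a u :: "'z \<Rightarrow> 'h::{real_inner, second_countable_topology}" and b :: "real \<Rightarrow> 'z \<Rightarrow> 'h"
  assumes a: "a \<in> L2H M" "L2Hnorm M a = 1" and u: "u \<in> L2H M"
    and b: "\<forall>\<^sub>F e in at 0. b e \<in> L2H M \<and> L2Hnorm M (b e) = 1"
    and deriv: "((\<lambda>e. L2Hnorm M (\<lambda>z. b e z - a z - e *\<^sub>R u z) / \<bar>e\<bar>) \<longlongrightarrow> 0) (at 0)"
  shows "L2H_inner M a u = 0"
proof -
  define \<rho> where "\<rho> e = L2Hnorm M (\<lambda>z. b e z - a z - e *\<^sub>R u z) / \<bar>e\<bar>" for e
  have "\<forall>\<^sub>F e in at 0. \<bar>L2H_inner M a u\<bar> \<le> \<rho> e + \<bar>e\<bar> * (L2Hnorm M u + \<rho> e)\<^sup>2 / 2"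
    using b eventually_neq_at_within[of 0 0 UNIV]
    by eventually_elim (simp add: \<rho>_def L2H_unit_vectors_inner_bound[OF a u])
  moreover have "((\<lambda>e. \<rho> e + \<bar>e\<bar> * (L2Hnorm M u + \<rho> e)\<^sup>2 / 2) \<longlongrightarrow> 0 + \<bar>0\<bar> * (L2Hnorm M u + 0)\<^sup>2 / 2) (at 0)"
    using deriv unfolding \<rho>_def[symmetric] by (intro tendsto_intros) simp_all
  ultimately have "\<bar>L2H_inner M a u\<bar> \<le> 0"
    by (intro tendsto_lowerbound[where F="at (0::real)"]) simp_all
  then show ?thesis by simp
qed

lemma model_setting_prob_space: "model_setting lam M \<Longrightarrow> Q \<in> M \<Longrightarrow> prob_space Q"
  by (simp add: model_setting_def)

lemma dens_integral:
  assumes "model_setting lam M" "Q \<in> M" "f \<in> borel_measurable lam"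
  shows "integrable Q f \<longleftrightarrow> integrable lam (\<lambda>z. dens lam Q z * f z)"
    and "(\<integral>z. f z \<partial>Q) = (\<integral>z. dens lam Q z * f z \<partial>lam)"
proof -
  interpret sigma_finite_measure lam
    using assms(1) by (simp add: model_setting_def)
  have "sets Q = sets lam" "absolutely_continuous lam Q"
    using assms(1,2) by (auto simp: model_setting_def)
  moreover have "sigma_finite_measure Q"
    using model_setting_prob_space[OF assms(1,2)] by (simp add: prob_space_imp_sigma_finite)
  ultimately show "integrable Q f \<longleftrightarrow> integrable lam (\<lambda>z. dens lam Q z * f z)"
    and "(\<integral>z. f z \<partial>Q) = (\<integral>z. dens lam Q z * f z \<partial>lam)"
    unfolding dens_def
    by (intro RN_deriv_integrable RN_deriv_integral assms(3); simp)+
qed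

lemma sqrt_dens_L2H:
  assumes "model_setting lam M" "Q \<in> M"
  shows "(\<lambda>z. sqrt (dens lam Q z)) \<in> L2H lam" "L2Hnorm lam (\<lambda>z. sqrt (dens lam Q z)) = 1"
proof -
  interpret Q: prob_space Q
    using model_setting_prob_space[OF assms] .
  have [measurable]: "dens lam Q \<in> borel_measurable lam"
    unfolding dens_def[abs_def] by measurable
  have sq: "(sqrt (dens lam Q z))\<^sup>2 = dens lam Q z" for z
    by (simp add: dens_def)
  show "(\<lambda>z. sqrt (dens lam Q z)) \<in> L2H lam"
    using dens_integral(1)[OF assms, of "\<lambda>z. 1"] by (simp add: L2H_def sq)
  show "L2Hnorm lam (\<lambda>z. sqrt (dens lam Q z)) = 1"
    using dens_integral(2)[OF assms, of "\<lambda>z. 1"] by (simp add: L2Hnorm_def sq Q.prob_space)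
qed

lemma tendsto_L2Hnorm_div_abs_0:
  fixes r :: "real \<Rightarrow> 'z \<Rightarrow> 'h::real_normed_vector"
  assumes r: "\<forall>\<^sub>F e in at 0. r e \<in> L2H M"
    and lim: "((\<lambda>e. (\<integral>\<^sup>+z. ennreal ((norm (r e z))\<^sup>2) \<partial>M) / ennreal (e\<^sup>2)) \<longlongrightarrow> 0) (at 0)"
  shows "((\<lambda>e. L2Hnorm M (r e) / \<bar>e\<bar>) \<longlongrightarrow> 0) (at 0)"
proof -
  have "\<forall>\<^sub>F e in at 0. (\<integral>\<^sup>+z. ennreal ((norm (r e z))\<^sup>2) \<partial>M) / ennreal (e\<^sup>2)
      = ennreal ((L2Hnorm M (r e) / \<bar>e\<bar>)\<^sup>2)"
    using r eventually_neq_at_within[of 0 0 UNIV]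
  proof eventually_elim
    case (elim e)
    then show ?case
      by (simp add: nn_integral_norm_squared_L2H divide_ennreal power_divide)
  qed
  with lim have "((\<lambda>e. ennreal ((L2Hnorm M (r e) / \<bar>e\<bar>)\<^sup>2)) \<longlongrightarrow> ennreal 0) (at 0)"
    using tendsto_cong by force
  then have "((\<lambda>e. (L2Hnorm M (r e) / \<bar>e\<bar>)\<^sup>2) \<longlongrightarrow> 0) (at 0)"
    by (subst (asm) tendsto_ennreal_iff) simp_all
  then have "((\<lambda>e. sqrt ((L2Hnorm M (r e) / \<bar>e\<bar>)\<^sup>2)) \<longlongrightarrow> sqrt 0) (at 0)"
    by (rule tendsto_real_sqrt)
  then show ?thesis
    by (simp add: L2Hnorm_nonneg)
qed

lemma L2_times_sqrt_dens:
  assumes ms: "model_setting lam M" and P: "P \<in> M" and s: "s \<in> L2 P"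
  shows "(\<lambda>z. s z * sqrt (dens lam P z)) \<in> L2H lam"
    and "L2H_inner lam (\<lambda>z. sqrt (dens lam P z)) (\<lambda>z. s z * sqrt (dens lam P z)) = (\<integral>z. s z \<partial>P)"
proof -
  have "sets P = sets lam"
    using ms P by (simp add: model_setting_def)
  then have [measurable]: "s \<in> borel_measurable lam"
    using s by (simp add: L2_def cong: measurable_cong_sets)
  have [measurable]: "dens lam P \<in> borel_measurable lam"
    unfolding dens_def[abs_def] by measurable
  have dens_nonneg: "dens lam P z \<ge> 0" for z
    by (simp add: dens_def)
  have "integrable lam (\<lambda>z. (s z)\<^sup>2 * dens lam P z)"
    using s dens_integral(1)[OF ms P, of "\<lambda>z. (s z)\<^sup>2"] by (simp add: L2_def mult.commute)
  then show "(\<lambda>z. s z * sqrt (dens lam P z)) \<in> L2H lam"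
    using dens_nonneg by (simp add: L2H_def power_mult_distrib)
  have "inner (sqrt (dens lam P z)) (s z * sqrt (dens lam P z)) = dens lam P z * s z" for z
    using dens_nonneg[of z] by (simp add: algebra_simps)
  then have "L2H_inner lam (\<lambda>z. sqrt (dens lam P z)) (\<lambda>z. s z * sqrt (dens lam P z))
      = (\<integral>z. dens lam P z * s z \<partial>lam)"
    by (simp only: L2H_inner_def)
  also have "\<dots> = (\<integral>z. s z \<partial>P)"
    using dens_integral(2)[OF ms P, of s] by simp
  finally show "L2H_inner lam (\<lambda>z. sqrt (dens lam P z)) (\<lambda>z. s z * sqrt (dens lam P z)) = (\<integral>z. s z \<partial>P)" .
qed

lemma score_mean_zero:
  assumes ms: "model_setting lam M" and P: "P \<in> M" and sub: "submodel lam M P Pe s"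
  shows "(\<integral>z. s z \<partial>P) = 0"
proof -
  define a where "a z = sqrt (dens lam P z)" for z
  define u where "u z = (1/2) *\<^sub>R (s z * sqrt (dens lam P z))" for z
  have Pe: "\<forall>\<^sub>F e in at 0. Pe e \<in> M" and s: "s \<in> L2 P"
    and dqm: "((\<lambda>e. (\<integral>\<^sup>+ z. ennreal ((sqrt (dens lam (Pe e) z) - sqrt (dens lam P z)
                 - e * s z * sqrt (dens lam P z) / 2)\<^sup>2) \<partial>lam) / ennreal (e\<^sup>2)) \<longlongrightarrow> 0) (at 0)"
    using sub by (auto simp: submodel_def)
  have a: "a \<in> L2H lam" "L2Hnorm lam a = 1"
    unfolding a_def[abs_def] by (rule sqrt_dens_L2H[OF ms P])+
  have u: "u \<in> L2H lam"
    unfolding u_def[abs_def] by (rule L2H_scaleR[OF L2_times_sqrt_dens(1)[OF ms P s]])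
  have "L2H_inner lam a u = (1/2) * L2H_inner lam a (\<lambda>z. s z * sqrt (dens lam P z))"
    unfolding u_def[abs_def] by (rule L2H_inner_scaleR_right)
  then have "(\<integral>z. s z \<partial>P) = 2 * L2H_inner lam a u"
    using L2_times_sqrt_dens(2)[OF ms P s] by (simp add: a_def[abs_def])
  also have "L2H_inner lam a u = 0"
  proof (rule L2H_unit_sphere_curve_orthogonal[OF a u])
    show "\<forall>\<^sub>F e in at 0. (\<lambda>z. sqrt (dens lam (Pe e) z)) \<in> L2H lam \<and>
        L2Hnorm lam (\<lambda>z. sqrt (dens lam (Pe e) z)) = 1"
      using Pe by eventually_elim (simp add: sqrt_dens_L2H[OF ms])
    show "((\<lambda>e. L2Hnorm lam (\<lambda>z. sqrt (dens lam (Pe e) z) - a z - e *\<^sub>R u z) / \<bar>e\<bar>) \<longlongrightarrow> 0) (at 0)"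
    proof (rule tendsto_L2Hnorm_div_abs_0)
      show "\<forall>\<^sub>F e in at 0. (\<lambda>z. sqrt (dens lam (Pe e) z) - a z - e *\<^sub>R u z) \<in> L2H lam"
        using Pe by eventually_elim (intro L2H_diff L2H_scaleR a(1) u sqrt_dens_L2H(1)[OF ms])
      show "((\<lambda>e. (\<integral>\<^sup>+z. ennreal ((norm (sqrt (dens lam (Pe e) z) - a z - e *\<^sub>R u z))\<^sup>2) \<partial>lam)
          / ennreal (e\<^sup>2)) \<longlongrightarrow> 0) (at 0)"
        using dqm by (simp add: a_def u_def mult.assoc)
    qed
  qed
  finally show ?thesis by simp
qed

lemma L2_eq_L2H: "L2 P = L2H P"
  by (simp add: L2_def L2H_def)

lemma L2norm_eq_L2Hnorm: "L2norm P f = L2Hnorm P f"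
  by (simp add: L2norm_def L2Hnorm_def)

lemma ex_sum_image_pairs_iff:
  "(\<exists>(n::nat) a. (\<forall>i<n. a i \<in> (\<lambda>(x, y). G x y) ` XY) \<and> L2Hnorm M (\<lambda>z. f z - (\<Sum>i<n. a i z)) < \<epsilon>) \<longleftrightarrow>
   (\<exists>(n::nat) x y. (\<forall>i<n. (x i, y i) \<in> XY) \<and> L2Hnorm M (\<lambda>z. f z - (\<Sum>i<n. G (x i) (y i) z)) < \<epsilon>)"
proof
  assume "\<exists>(n::nat) a. (\<forall>i<n. a i \<in> (\<lambda>(x, y). G x y) ` XY) \<and> L2Hnorm M (\<lambda>z. f z - (\<Sum>i<n. a i z)) < \<epsilon>"
  then obtain n :: nat and a where a: "\<forall>i<n. a i \<in> (\<lambda>(x, y). G x y) ` XY"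
    and approx: "L2Hnorm M (\<lambda>z. f z - (\<Sum>i<n. a i z)) < \<epsilon>"
    by blast
  then have "\<forall>i. \<exists>p. i < n \<longrightarrow> p \<in> XY \<and> a i = (\<lambda>(x, y). G x y) p"
    by blast
  from choice[OF this] obtain p where p: "\<And>i. i < n \<Longrightarrow> p i \<in> XY \<and> a i = (\<lambda>(x, y). G x y) (p i)"
    by blast
  have "(\<Sum>i<n. a i z) = (\<Sum>i<n. G (fst (p i)) (snd (p i)) z)" for z
    using p by (intro sum.cong) (simp_all add: case_prod_beta)
  with p approx show "\<exists>(n::nat) x y. (\<forall>i<n. (x i, y i) \<in> XY) \<and>
      L2Hnorm M (\<lambda>z. f z - (\<Sum>i<n. G (x i) (y i) z)) < \<epsilon>"
    by (intro exI[of _ n] exI[of _ "\<lambda>i. fst (p i)"] exI[of _ "\<lambda>i. snd (p i)"]) simp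
next
  assume "\<exists>(n::nat) x y. (\<forall>i<n. (x i, y i) \<in> XY) \<and> L2Hnorm M (\<lambda>z. f z - (\<Sum>i<n. G (x i) (y i) z)) < \<epsilon>"
  then obtain n :: nat and x y where "\<forall>i<n. (x i, y i) \<in> XY"
    "L2Hnorm M (\<lambda>z. f z - (\<Sum>i<n. G (x i) (y i) z)) < \<epsilon>"
    by blast
  then show "\<exists>(n::nat) a. (\<forall>i<n. a i \<in> (\<lambda>(x, y). G x y) ` XY) \<and>
      L2Hnorm M (\<lambda>z. f z - (\<Sum>i<n. a i z)) < \<epsilon>"
    by (intro exI[of _ n] exI[of _ "\<lambda>i. G (x i) (y i)"]) (auto intro: rev_image_eqI)
qed

definition score_multiples :: "'z::polish_space measure \<Rightarrow> 'z measure set \<Rightarrow> 'z measure \<Rightarrow> ('z \<Rightarrow> real) set" where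
  "score_multiples lam M P = (\<lambda>(c, s) z. c * s z) ` (UNIV \<times> scores lam M P)"

definition tangent_tensors ::
  "'z::polish_space measure \<Rightarrow> 'z measure set \<Rightarrow> 'z measure \<Rightarrow> ('z \<Rightarrow> 'h::real_normed_vector) set" where
  "tangent_tensors lam M P = (\<lambda>(s, h) z. s z *\<^sub>R h) ` (tangent_space lam M P \<times> UNIV)"

lemma tangent_space_eq_sum_closure:
  "tangent_space lam M P = L2H_sum_closure P (score_multiples lam M P)"
  unfolding tangent_space_def L2H_sum_closure_def score_multiples_def ex_sum_image_pairs_iff
  by (simp add: L2_eq_L2H L2norm_eq_L2Hnorm)

lemma Phi_eq_sum_closure: "Phi lam M P = L2H_sum_closure P (tangent_tensors lam M P)"
  unfolding Phi_def L2H_sum_closure_def tangent_tensors_def ex_sum_image_pairs_iff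
  by simp

lemma score_L2H: "s \<in> scores lam M P \<Longrightarrow> s \<in> L2H P"
  by (auto simp: scores_def submodel_def L2_eq_L2H)

lemma score_multiples_L2H: "score_multiples lam M P \<subseteq> L2H P"
  using L2H_scaleR[OF score_L2H] by (auto simp: score_multiples_def)

lemma score_multiples_scaleR:
  assumes "b \<in> score_multiples lam M P"
  shows "(\<lambda>z. c *\<^sub>R b z) \<in> score_multiples lam M P"
proof -
  obtain c' s where "s \<in> scores lam M P" "b = (\<lambda>z. c' * s z)"
    using assms by (auto simp: score_multiples_def)
  then show ?thesis
    unfolding score_multiples_def by (intro image_eqI[where x="(c * c', s)"]) (simp_all add: mult.assoc)
qed

lemma tangent_space_closed_subspace: "L2H_closed_subspace P (tangent_space lam M P)"
  unfolding tangent_space_eq_sum_closure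
  by (rule L2H_sum_closure_closed_subspace[OF score_multiples_L2H score_multiples_scaleR])

lemma tangent_tensors_L2H:
  "tangent_tensors lam M P \<subseteq> (L2H P :: ('z::polish_space \<Rightarrow> 'h::{real_normed_vector, second_countable_topology}) set)"
  using L2H_scaleR_vector[OF L2H_closed_subspace_L2H[OF tangent_space_closed_subspace]]
  by (auto simp: tangent_tensors_def)

lemma tangent_tensors_scaleR:
  assumes "b \<in> tangent_tensors lam M P"
  shows "(\<lambda>z. c *\<^sub>R b z) \<in> tangent_tensors lam M P"
proof -
  obtain s h where "s \<in> tangent_space lam M P" "b = (\<lambda>z. s z *\<^sub>R h)"
    using assms by (auto simp: tangent_tensors_def)
  then show ?thesis
    unfolding tangent_tensors_def by (intro image_eqI[where x="(s, c *\<^sub>R h)"]) (simp_all add: mult.commute)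
qed

lemma Phi_closed_subspace:
  "L2H_closed_subspace P (Phi lam M P :: ('z::polish_space \<Rightarrow> 'h::{real_inner, second_countable_topology}) set)"
  unfolding Phi_eq_sum_closure by (rule L2H_sum_closure_closed_subspace[OF tangent_tensors_L2H tangent_tensors_scaleR])

lemma mean_zero_closed_subspace:
  fixes M :: "'z measure"
  assumes "prob_space M"
  shows "L2H_closed_subspace M {f \<in> L2H M. (\<integral>z. f z \<partial>M) = (0::real)}"
  unfolding L2H_closed_subspace_def
proof (intro conjI ballI allI impI)
  show "(\<lambda>z. f z + g z) \<in> {f \<in> L2H M. (\<integral>z. f z \<partial>M) = 0}"
    if "f \<in> {f \<in> L2H M. (\<integral>z. f z \<partial>M) = 0}" "g \<in> {f \<in> L2H M. (\<integral>z. f z \<partial>M) = 0}"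
    for f g :: "'z \<Rightarrow> real"
    using that L2H_integral_le_L2Hnorm(1)[OF assms] by (simp add: L2H_add)
  show "f \<in> {f \<in> L2H M. (\<integral>z. f z \<partial>M) = 0}"
    if f: "f \<in> L2H M" and approx: "\<forall>\<epsilon>>0. \<exists>g\<in>{f \<in> L2H M. (\<integral>z. f z \<partial>M) = 0}. L2Hnorm M (\<lambda>z. f z - g z) < \<epsilon>"
    for f :: "'z \<Rightarrow> real"
  proof -
    have "\<bar>\<integral>z. f z \<partial>M\<bar> \<le> \<epsilon>" if "\<epsilon> > 0" for \<epsilon>
    proof -
      obtain g where g: "g \<in> L2H M" "(\<integral>z. g z \<partial>M) = 0" "L2Hnorm M (\<lambda>z. f z - g z) < \<epsilon>"
        using approx \<open>\<epsilon> > 0\<close> by blast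
      have "(\<integral>z. f z \<partial>M) = (\<integral>z. f z - g z \<partial>M)"
        using g(2) L2H_integral_le_L2Hnorm(1)[OF assms] f g(1) by simp
      also have "\<bar>\<dots>\<bar> \<le> L2Hnorm M (\<lambda>z. f z - g z)"
        by (rule L2H_integral_le_L2Hnorm(2)[OF assms L2H_diff[OF f g(1)]])
      finally show ?thesis using g(3) by simp
    qed
    then show ?thesis
      using f field_le_epsilon[of "\<bar>\<integral>z. f z \<partial>M\<bar>" 0] by simp
  qed
  show "(\<lambda>z. c *\<^sub>R f z) \<in> {f \<in> L2H M. (\<integral>z. f z \<partial>M) = 0}"
    if "f \<in> {f \<in> L2H M. (\<integral>z. f z \<partial>M) = 0}" for c and f :: "'z \<Rightarrow> real"
    using that L2H_scaleR[of f M c] by simp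
qed (simp_all add: L2H_zero)

lemma tangent_space_subset_L2_0:
  assumes "model_setting lam M" "P \<in> M"
  shows "tangent_space lam M P \<subseteq> L2_0 P"
proof -
  have "score_multiples lam M P \<subseteq> {f \<in> L2H P. (\<integral>z. f z \<partial>P) = 0}"
    using score_multiples_L2H score_mean_zero[OF assms]
    by (fastforce simp: score_multiples_def scores_def)
  then show ?thesis
    unfolding tangent_space_eq_sum_closure L2_0_def L2_eq_L2H
    by (rule L2H_sum_closure_subset[OF mean_zero_closed_subspace[OF model_setting_prob_space[OF assms]]])
qed

lemma inner_Phi_mem_tangent_space:
  fixes phi :: "'z::polish_space \<Rightarrow> 'h::{real_inner, second_countable_topology}"
  assumes "phi \<in> Phi lam M P"
  shows "(\<lambda>z. inner h (phi z)) \<in> tangent_space lam M P"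
proof (rule L2H_sum_closure_inner_mem[OF tangent_tensors_L2H tangent_tensors_scaleR tangent_space_closed_subspace])
  show "phi \<in> L2H_sum_closure P (tangent_tensors lam M P)"
    using assms by (simp add: Phi_eq_sum_closure)
  fix b :: "'z \<Rightarrow> 'h" assume "b \<in> tangent_tensors lam M P"
  then obtain s h' where s: "s \<in> tangent_space lam M P" and b: "b = (\<lambda>z. s z *\<^sub>R h')"
    by (auto simp: tangent_tensors_def)
  have "(\<lambda>z. inner h h' *\<^sub>R s z) \<in> tangent_space lam M P"
    by (rule L2H_closed_subspace_scaleR[OF tangent_space_closed_subspace s])
  then show "(\<lambda>z. inner h (b z)) \<in> tangent_space lam M P"
    by (simp add: b mult.commute)
qed

lemma orth_proj_Phi_adjoint:
  fixes phi phi_ext :: "'z::polish_space \<Rightarrow> 'h::{real_inner, second_countable_topology}"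
  assumes ms: "model_setting lam M" and P: "P \<in> M"
    and "influence_function lam M P D phi_ext" and phi_ext: "phi_ext \<in> L2H P"
    and "is_orth_proj P (Phi lam M P) phi_ext phi"
  shows "is_adjoint P (tangent_space lam M P) D (\<lambda>h z. inner h (phi z))"
  unfolding is_adjoint_def
proof (intro allI conjI ballI)
  have phi: "phi \<in> Phi lam M P" and orth: "\<And>k. k \<in> Phi lam M P \<Longrightarrow> L2H_inner P (\<lambda>z. phi_ext z - phi z) k = 0"
    using assms(5) by (auto simp: is_orth_proj_def L2H_inner_def)
  obtain Dext A where Dext: "\<forall>f\<in>tangent_space lam M P. Dext f = D f"
    and adj: "is_adjoint P (L2_0 P) Dext A" and A: "\<forall>h. AE z in P. A h z = inner h (phi_ext z)"
    using assms(3) by (auto simp: influence_function_def)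
  fix h
  show "(\<lambda>z. inner h (phi z)) \<in> tangent_space lam M P"
    by (rule inner_Phi_mem_tangent_space[OF phi])
  fix f assume f: "f \<in> tangent_space lam M P"
  then have "f \<in> L2_0 P"
    using tangent_space_subset_L2_0[OF ms P] by blast
  then have [measurable]: "f \<in> borel_measurable P" "A h \<in> borel_measurable P"
    using adj by (auto simp: is_adjoint_def L2_0_def L2_def)
  have [measurable]: "phi_ext \<in> borel_measurable P"
    by (rule L2H_borel_measurable[OF phi_ext])
  have fh: "(\<lambda>z. f z *\<^sub>R h) \<in> Phi lam M P"
    unfolding Phi_eq_sum_closure using f
    by (intro L2H_sum_closure_base[OF tangent_tensors_L2H tangent_tensors_scaleR])
      (auto simp: tangent_tensors_def)
  have "inner (D f) h = inner (Dext f) h"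
    using Dext f by simp
  also have "\<dots> = (\<integral>z. f z * A h z \<partial>P)"
    using adj \<open>f \<in> L2_0 P\<close> by (simp add: is_adjoint_def)
  also have "\<dots> = L2H_inner P phi_ext (\<lambda>z. f z *\<^sub>R h)"
    unfolding L2H_inner_def using A[rule_format, of h]
    by (intro integral_cong_AE) (auto simp: inner_commute)
  also have "\<dots> = L2H_inner P phi (\<lambda>z. f z *\<^sub>R h)"
    using orth[OF fh] L2H_inner_diff_left[OF phi_ext _ L2H_closed_subspace_L2H[OF Phi_closed_subspace fh]]
      L2H_closed_subspace_L2H[OF Phi_closed_subspace phi] by simp
  finally show "inner (D f) h = (\<integral>z. f z * inner h (phi z) \<partial>P)"
    by (simp add: L2H_inner_def inner_commute)
qed

lemma efficient_influence_function_if_adjoint: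
  fixes phi :: "'z::polish_space \<Rightarrow> 'h::{real_inner, polish_space}"
  assumes "is_adjoint P (tangent_space lam M P) D (\<lambda>h z. inner h (phi z))"
  shows "efficient_influence_function lam M P D phi"
proof -
  obtain H' :: "'h set" where "countable H'" and dense: "\<And>X. open X \<Longrightarrow> X \<noteq> {} \<Longrightarrow> \<exists>h\<in>H'. h \<in> X"
    using countable_dense_setE by blast
  have "closure H' = UNIV"
    using dense by (auto simp: closure_iff_nhds_not_empty) blast
  moreover have "\<exists>hj. (\<forall>j. hj j \<in> H') \<and> hj \<longlonglongrightarrow> h \<and> (\<lambda>j. inner (hj j) (phi z)) \<longlonglongrightarrow> inner h (phi z)"
    for h z
  proof -
    obtain hj where "\<forall>j. hj j \<in> H'" "hj \<longlonglongrightarrow> h"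
      using \<open>closure H' = UNIV\<close> closure_sequential by blast
    then show ?thesis
      by (intro exI[of _ hj]) (auto intro: tendsto_intros)
  qed
  ultimately show ?thesis
    unfolding efficient_influence_function_def efficient_influence_operator_def
    using assms \<open>countable H'\<close> by (intro exI[of _ "\<lambda>h z. inner h (phi z)"]) auto
qed

theorem lemmaS15:
  fixes lam :: "'z::polish_space measure"
    and M :: "'z measure set"
    and nu :: "'z measure \<Rightarrow> 'h::{real_inner, polish_space}"
    and P :: "'z measure"
    and D :: "('z \<Rightarrow> real) \<Rightarrow> 'h"
    and phi_ext :: "'z \<Rightarrow> 'h"
  assumes "model_setting lam M"
    and "P \<in> M"
    and "pathwise_derivative lam M nu P D"
    and "influence_function lam M P D phi_ext"
    and "phi_ext \<in> L2H P"
  shows "(\<exists>phi. is_orth_proj P (Phi lam M P) phi_ext phi) \<and>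
         (\<forall>phi. is_orth_proj P (Phi lam M P) phi_ext phi \<longrightarrow>
              phi \<in> L2H P \<and> efficient_influence_function lam M P D phi)"
proof (intro conjI allI impI)
  show "\<exists>phi. is_orth_proj P (Phi lam M P) phi_ext phi"
    using L2H_orth_proj_exists[OF model_setting_prob_space[OF assms(1,2)] Phi_closed_subspace assms(5)] .
  fix phi assume proj: "is_orth_proj P (Phi lam M P) phi_ext phi"
  then show "phi \<in> L2H P"
    using L2H_closed_subspace_L2H[OF Phi_closed_subspace] by (auto simp: is_orth_proj_def)
  show "efficient_influence_function lam M P D phi"
    by (rule efficient_influence_function_if_adjoint[OF orth_proj_Phi_adjoint[OF assms(1,2,4,5) proj]])
qed

end
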